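(* Let $\mathcal{S}$ be a finite set of road segments and $y_1,\dots,y_N$ (collectively $y_{[N]}$) the routes of $N$ historical trips, each a nonempty set of distinct segments. For each $n$ and $s\in y_n$ one observes $T'_{n,s}=\theta_s+\varepsilon_{n,s}$, where the $\theta_s$ are i.i.d. with mean $\mu$ and variance $\tau^2>0$, independent of the errors; for each $n$ the errors $(\varepsilon_{n,s})_{s\in y_n}$ have mean $0$ and covariances $\sigma_{s,t}$; errors from different trips are independent; and the errors together with $\theta$ are jointly Gaussian. Let $\Psi=[\psi_{s,t}]$ be the precision matrix (inverse of the covariance matrix $[\sigma_{s,t}]_{s,t\in\mathcal{S}}$) of the segment travel times, and $N_{s\cup t}=|\{n: s,t\in y_n\}|$. Then for any route $y$, the optimal estimator $\hat\Theta^\ast_y$ (the one minimizing the integrated risk) satisfies $$R\big(\hat\Theta^\ast_y\mid y_{[N]}\big)\ge\frac{|y|^2}{\sum_{s,t\in y}N_{s\cup t}\psi_{s,t}+|y|/\tau^2}.$$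
   Context: The integrated risk is $R(\hat\Theta_y\mid y_{[N]})=\mathbb{E}[(\hat\Theta_y-\sum_{s\in y}\theta_s)^2\mid y_{[N]}]$, expectation over errors and prior of $\theta$, conditional on the historical routes. For $s=t$, $N_{s\cup s}$ is the number of trips traversing $s$. *)

theory Defs
  imports "HOL-Probability.Probability"
begin

definition gaussian_rv :: "'a measure \<Rightarrow> ('a \<Rightarrow> real) \<Rightarrow> bool" where
  "gaussian_rv M X \<longleftrightarrow> X \<in> borel_measurable M \<and>
     ((\<exists>c. AE x in M. X x = c) \<or>
      (\<exists>m sd. sd > 0 \<and> distributed M lborel X (normal_density m sd)))"

definition jointly_gaussian :: "'a measure \<Rightarrow> 'i set \<Rightarrow> ('i \<Rightarrow> 'a \<Rightarrow> real) \<Rightarrow> bool" where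
  "jointly_gaussian M I X \<longleftrightarrow>
     (\<forall>J c. finite J \<longrightarrow> J \<subseteq> I \<longrightarrow> gaussian_rv M (\<lambda>x. \<Sum>i\<in>J. c i * X i x))"

definition obs_index :: "nat \<Rightarrow> (nat \<Rightarrow> 's set) \<Rightarrow> (nat \<times> 's) set" where
  "obs_index N y = {(n, s). n < N \<and> s \<in> y n}"

definition observations ::
  "nat \<Rightarrow> (nat \<Rightarrow> 's set) \<Rightarrow> ('s \<Rightarrow> 'a \<Rightarrow> real) \<Rightarrow> (nat \<Rightarrow> 's \<Rightarrow> 'a \<Rightarrow> real) \<Rightarrow> 'a \<Rightarrow> (nat \<times> 's \<Rightarrow> real)" where
  "observations N y \<theta> \<epsilon> \<omega> = restrict (\<lambda>(n, s). \<theta> s \<omega> + \<epsilon> n s \<omega>) (obs_index N y)"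

definition estimators :: "nat \<Rightarrow> (nat \<Rightarrow> 's set) \<Rightarrow> ((nat \<times> 's \<Rightarrow> real) \<Rightarrow> real) set" where
  "estimators N y = borel_measurable (PiM (obs_index N y) (\<lambda>_. borel))"

text \<open>Integrated risk E[(hat Theta_r - sum_{s in r} theta_s)^2] (as an extended nonnegative real,
  so that infinite risk is allowed).\<close>
definition integrated_risk ::
  "'a measure \<Rightarrow> nat \<Rightarrow> (nat \<Rightarrow> 's set) \<Rightarrow> ('s \<Rightarrow> 'a \<Rightarrow> real) \<Rightarrow> (nat \<Rightarrow> 's \<Rightarrow> 'a \<Rightarrow> real)
     \<Rightarrow> 's set \<Rightarrow> ((nat \<times> 's \<Rightarrow> real) \<Rightarrow> real) \<Rightarrow> ennreal" where
  "integrated_risk M N y \<theta> \<epsilon> r g =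
     (\<integral>\<^sup>+ \<omega>. ennreal ((g (observations N y \<theta> \<epsilon> \<omega>) - (\<Sum>s\<in>r. \<theta> s \<omega>))\<^sup>2) \<partial>M)"

definition optimal_estimator ::
  "'a measure \<Rightarrow> nat \<Rightarrow> (nat \<Rightarrow> 's set) \<Rightarrow> ('s \<Rightarrow> 'a \<Rightarrow> real) \<Rightarrow> (nat \<Rightarrow> 's \<Rightarrow> 'a \<Rightarrow> real)
     \<Rightarrow> 's set \<Rightarrow> ((nat \<times> 's \<Rightarrow> real) \<Rightarrow> real) \<Rightarrow> bool" where
  "optimal_estimator M N y \<theta> \<epsilon> r g \<longleftrightarrow> g \<in> estimators N y \<and>
     (\<forall>h \<in> estimators N y. integrated_risk M N y \<theta> \<epsilon> r g \<le> integrated_risk M N y \<theta> \<epsilon> r h)"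

definition co_count :: "nat \<Rightarrow> (nat \<Rightarrow> 's set) \<Rightarrow> 's \<Rightarrow> 's \<Rightarrow> nat" where
  "co_count N y s t = card {n. n < N \<and> s \<in> y n \<and> t \<in> y n}"

end

theory Submission
  imports Defs
begin

(* The bound holds for every measurable estimator g.
   Let Z = sum_{s in r} theta_s. For each trip n let b_n solve Sigma_n b_n = 1_r on y_n, where Sigma_n
   is the error covariance restricted to the route y_n, and put
     D = sum_{s in r} theta_s / tau^2 - sum_n sum_{s in y_n} b_{n,s} eps_{n,s}.
   D is uncorrelated with every observation T'_{n,s} = theta_s + eps_{n,s}; since (theta, eps) is jointly
   Gaussian, D - E D is then orthogonal to every function of the observations. Hence
   E[(g(T') - Z) (D - E D)] = - Cov(Z, D) = - |r| for every estimator g, and Cauchy-Schwarz gives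
   risk >= |r|^2 / Var D. Finally Var D = |r| / tau^2 + sum_n <b_n, 1_r>, and <b_n, 1_r>, the sum of the
   entries of (Sigma_n)^-1 over r, is at most the corresponding sum of entries of the precision matrix Psi.
   Orthogonality is obtained from characteristic functions: uncorrelatedness makes the joint
   characteristic function factor, and the uniqueness theorem for multivariate distributions is reduced,
   one coordinate at a time, to Levy's uniqueness theorem. *)

section \<open>Square-integrable random variables and covariance\<close>

lemma abs_mult_le_sum_squares: "\<bar>a * b\<bar> \<le> a\<^sup>2 + (b::real)\<^sup>2"
proof -
  have "0 \<le> (\<bar>a\<bar> - \<bar>b\<bar>)\<^sup>2" by simp
  then have "2 * (\<bar>a\<bar> * \<bar>b\<bar>) \<le> a\<^sup>2 + b\<^sup>2" by (simp add: power2_diff)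
  moreover have "0 \<le> \<bar>a\<bar> * \<bar>b\<bar>" by simp
  ultimately show ?thesis unfolding abs_mult by linarith
qed

lemma integrable_mult_of_square_integrable:
  fixes f g :: "'a \<Rightarrow> real"
  assumes "f \<in> borel_measurable M" "g \<in> borel_measurable M"
    and "integrable M (\<lambda>x. (f x)\<^sup>2)" "integrable M (\<lambda>x. (g x)\<^sup>2)"
  shows "integrable M (\<lambda>x. f x * g x)"
  by (rule Bochner_Integration.integrable_bound[of _ "\<lambda>x. (f x)\<^sup>2 + (g x)\<^sup>2"])
     (use assms in \<open>auto intro!: AE_I2 abs_mult_le_sum_squares\<close>)

lemma integrable_mult_bounded:
  fixes f g :: "'a \<Rightarrow> real"
  assumes "integrable M f" "g \<in> borel_measurable M" "\<And>x. \<bar>g x\<bar> \<le> B"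
  shows "integrable M (\<lambda>x. f x * g x)"
proof (rule Bochner_Integration.integrable_bound[of _ "\<lambda>x. B * f x"])
  have "\<bar>f x\<bar> * \<bar>g x\<bar> \<le> \<bar>B\<bar> * \<bar>f x\<bar>" for x
    using mult_left_mono[OF order_trans[OF assms(3) abs_ge_self], of "\<bar>f x\<bar>"] by (simp add: mult.commute)
  then show "AE x in M. norm (f x * g x) \<le> norm (B * f x)" by (simp add: abs_mult)
qed (use assms in auto)

lemma square_integrable_diff:
  fixes f g :: "'a \<Rightarrow> real"
  assumes "f \<in> borel_measurable M" "g \<in> borel_measurable M"
    and "integrable M (\<lambda>x. (f x)\<^sup>2)" "integrable M (\<lambda>x. (g x)\<^sup>2)"
  shows "integrable M (\<lambda>x. (f x - g x)\<^sup>2)"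
proof -
  have "integrable M (\<lambda>x. (f x)\<^sup>2 - 2 * (f x * g x) + (g x)\<^sup>2)"
    using assms integrable_mult_of_square_integrable[OF assms] by auto
  moreover have "(\<lambda>x. (f x - g x)\<^sup>2) = (\<lambda>x. (f x)\<^sup>2 - 2 * (f x * g x) + (g x)\<^sup>2)"
    by (simp add: fun_eq_iff power2_diff)
  ultimately show ?thesis by simp
qed

lemma (in finite_measure) square_integrable_diff_const:
  fixes f :: "'a \<Rightarrow> real"
  assumes "f \<in> borel_measurable M" "integrable M (\<lambda>x. (f x)\<^sup>2)"
  shows "integrable M (\<lambda>x. (f x - c)\<^sup>2)"
proof -
  have "integrable M f" using assms by (rule square_integrable_imp_integrable)
  then have "integrable M (\<lambda>x. (f x)\<^sup>2 - 2 * c * f x + c\<^sup>2)" using assms by auto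
  then show ?thesis by (simp add: power2_diff algebra_simps)
qed

lemma (in finite_measure) integrable_mult_diff_const:
  fixes f g :: "'a \<Rightarrow> real"
  assumes "f \<in> borel_measurable M" "g \<in> borel_measurable M"
    and "integrable M (\<lambda>x. (f x)\<^sup>2)" "integrable M (\<lambda>x. (g x)\<^sup>2)"
  shows "integrable M (\<lambda>x. (f x - a) * (g x - b))"
  using assms by (intro integrable_mult_of_square_integrable square_integrable_diff_const) auto

context prob_space
begin

definition covariance :: "('a \<Rightarrow> real) \<Rightarrow> ('a \<Rightarrow> real) \<Rightarrow> real" where
  "covariance X Y = expectation (\<lambda>\<omega>. (X \<omega> - expectation X) * (Y \<omega> - expectation Y))"

lemma covariance_commute: "covariance X Y = covariance Y X"
  by (simp add: covariance_def mult.commute)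

lemma covariance_self: "covariance X X = variance X"
  by (simp add: covariance_def power2_eq_square)

lemma covariance_eq:
  fixes X Y :: "'a \<Rightarrow> real"
  assumes "integrable M X" "integrable M Y" "integrable M (\<lambda>\<omega>. X \<omega> * Y \<omega>)"
  shows "covariance X Y = expectation (\<lambda>\<omega>. X \<omega> * Y \<omega>) - expectation X * expectation Y"
proof -
  have "covariance X Y = expectation (\<lambda>\<omega>. X \<omega> * Y \<omega> - expectation Y * X \<omega> - expectation X * Y \<omega>
      + expectation X * expectation Y)"
    unfolding covariance_def by (rule Bochner_Integration.integral_cong) (auto simp: algebra_simps)
  also have "\<dots> = expectation (\<lambda>\<omega>. X \<omega> * Y \<omega>) - expectation X * expectation Y"
    using assms by (simp add: prob_space)
  finally show ?thesis .
qed

lemma covariance_eq_expectation_centered: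
  fixes X Y :: "'a \<Rightarrow> real"
  assumes "X \<in> borel_measurable M" "Y \<in> borel_measurable M"
    and "integrable M (\<lambda>\<omega>. (X \<omega>)\<^sup>2)" "integrable M (\<lambda>\<omega>. (Y \<omega>)\<^sup>2)"
  shows "covariance X Y = expectation (\<lambda>\<omega>. X \<omega> * (Y \<omega> - expectation Y))"
proof -
  have int: "integrable M X" "integrable M Y" using assms by (auto intro: square_integrable_imp_integrable)
  have "integrable M (\<lambda>\<omega>. (X \<omega> - 0) * (Y \<omega> - expectation Y))"
    using assms by (intro integrable_mult_diff_const)
  then have "integrable M (\<lambda>\<omega>. X \<omega> * (Y \<omega> - expectation Y))" by simp
  then show ?thesis
    unfolding covariance_def using int by (simp add: left_diff_distrib prob_space)
qed

lemma covariance_sum_right: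
  fixes X :: "'a \<Rightarrow> real" and T :: "'k \<Rightarrow> 'a \<Rightarrow> real"
  assumes "finite K" "X \<in> borel_measurable M" "integrable M (\<lambda>\<omega>. (X \<omega>)\<^sup>2)"
    and "\<And>k. k \<in> K \<Longrightarrow> T k \<in> borel_measurable M"
    and "\<And>k. k \<in> K \<Longrightarrow> integrable M (\<lambda>\<omega>. (T k \<omega>)\<^sup>2)"
  shows "covariance X (\<lambda>\<omega>. \<Sum>k\<in>K. u k * T k \<omega>) = (\<Sum>k\<in>K. u k * covariance X (T k))"
proof -
  have int_T: "integrable M (T k)" if "k \<in> K" for k
    using that assms by (auto intro: square_integrable_imp_integrable)
  have "covariance X (\<lambda>\<omega>. \<Sum>k\<in>K. u k * T k \<omega>)
      = expectation (\<lambda>\<omega>. \<Sum>k\<in>K. u k * ((X \<omega> - expectation X) * (T k \<omega> - expectation (T k))))"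
    unfolding covariance_def using int_T
    by (simp add: Bochner_Integration.integral_sum sum_distrib_left sum_subtractf[symmetric]
        right_diff_distrib mult.left_commute)
  also have "\<dots> = (\<Sum>k\<in>K. u k * covariance X (T k))"
    unfolding covariance_def using assms
    by (subst Bochner_Integration.integral_sum) (auto intro!: integrable_mult_diff_const)
  finally show ?thesis .
qed

lemma variance_scaled_add:
  fixes D X :: "'a \<Rightarrow> real"
  assumes [measurable]: "D \<in> borel_measurable M" "X \<in> borel_measurable M"
    and "integrable M (\<lambda>\<omega>. (D \<omega>)\<^sup>2)" "integrable M (\<lambda>\<omega>. (X \<omega>)\<^sup>2)"
  shows "variance (\<lambda>\<omega>. s * D \<omega> + X \<omega>) = s\<^sup>2 * variance D + 2 * s * covariance D X + variance X"
proof -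
  have "integrable M D" "integrable M X"
    using assms by (auto intro: square_integrable_imp_integrable)
  then have "expectation (\<lambda>\<omega>. s * D \<omega> + X \<omega>) = s * expectation D + expectation X" by simp
  then have "variance (\<lambda>\<omega>. s * D \<omega> + X \<omega>) = expectation (\<lambda>\<omega>. s\<^sup>2 * (D \<omega> - expectation D)\<^sup>2
      + 2 * s * ((D \<omega> - expectation D) * (X \<omega> - expectation X)) + (X \<omega> - expectation X)\<^sup>2)"
    by (simp add: power2_eq_square algebra_simps)
  also have "\<dots> = s\<^sup>2 * variance D + 2 * s * covariance D X + variance X"
    unfolding covariance_def using assms
    by (simp add: square_integrable_diff_const integrable_mult_diff_const)
  finally show ?thesis .
qed

lemma covariance_indep_var:
  fixes X Y :: "'a \<Rightarrow> real"
  assumes "indep_var borel X borel Y" "integrable M X" "integrable M Y"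
  shows "covariance X Y = 0"
  using assms by (simp add: covariance_eq indep_var_integrable indep_var_lebesgue_integral)

lemma indep_vars_imp_indep_var:
  assumes "indep_vars M' X I" "i \<in> I" "j \<in> I" "i \<noteq> j"
  shows "indep_var (M' i) (X i) (M' j) (X j)"
proof -
  have "indep_var (PiM {i} M') (\<lambda>\<omega>. restrict (\<lambda>k. X k \<omega>) {i}) (PiM {j} M') (\<lambda>\<omega>. restrict (\<lambda>k. X k \<omega>) {j})"
    using assms by (intro indep_var_restrict) auto
  then have "indep_var (M' i) ((\<lambda>f. f i) \<circ> (\<lambda>\<omega>. restrict (\<lambda>k. X k \<omega>) {i}))
      (M' j) ((\<lambda>f. f j) \<circ> (\<lambda>\<omega>. restrict (\<lambda>k. X k \<omega>) {j}))"
    by (rule indep_var_compose) (auto intro!: measurable_component_singleton)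
  then show ?thesis by (simp add: comp_def)
qed

lemma indep_var_of_indep_set:
  assumes ind: "indep_set F G"
    and "X \<in> borel_measurable M" "Y \<in> borel_measurable M"
    and XF: "sigma_sets (space M) {X -` A \<inter> space M | A. A \<in> sets borel} \<subseteq> F"
    and YG: "sigma_sets (space M) {Y -` A \<inter> space M | A. A \<in> sets borel} \<subseteq> G"
  shows "indep_var borel X borel Y"
proof -
  have "indep_sets (case_bool F G) UNIV" using ind by (simp add: indep_set_def)
  then have "indep_sets (case_bool (sigma_sets (space M) {X -` A \<inter> space M | A. A \<in> sets borel})
      (sigma_sets (space M) {Y -` A \<inter> space M | A. A \<in> sets borel})) UNIV"
    by (rule indep_sets_mono_sets) (use XF YG in \<open>auto split: bool.split\<close>)
  then show ?thesis using assms(2,3) by (simp add: indep_var_eq indep_set_def)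
qed

end

section \<open>Uncorrelated Gaussian variables\<close>

lemma le_zero_if_le_quadratic_bound:
  fixes a v :: real
  assumes v: "v \<ge> 0" and bound: "\<And>h. h > 0 \<Longrightarrow> h * a \<le> h\<^sup>2 * v"
  shows "a \<le> 0"
proof (rule ccontr)
  assume "\<not> a \<le> 0"
  then have a: "a > 0" by simp
  define h where "h = a / (2 * v + 1)"
  have h: "h > 0" using a v by (simp add: h_def)
  have "a \<le> h * v"
    using bound[OF h] h by (simp add: power2_eq_square mult.assoc)
  also have "\<dots> < a"
    using a v by (simp add: h_def field_simps) (auto intro!: add_pos_nonneg)
  finally show False by simp
qed

lemma iexp_add: "iexp (x + y) = iexp x * iexp y"
  by (simp add: distrib_left exp_add)

context prob_space
begin

lemma integrable_square_gaussian_rv: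
  assumes "gaussian_rv M Y"
  shows "integrable M (\<lambda>x. (Y x)\<^sup>2)"
proof -
  have meas: "Y \<in> borel_measurable M" using assms by (simp add: gaussian_rv_def)
  consider c where "AE x in M. Y x = c"
    | m sd where "sd > 0" "distributed M lborel Y (normal_density m sd)"
    using assms by (auto simp: gaussian_rv_def)
  then show ?thesis
  proof cases
    case 1
    have "integrable M (\<lambda>x. c\<^sup>2)" by simp
    then show ?thesis by (rule integrable_cong_AE_imp) (use 1 meas in auto)
  next
    case 2
    have "integrable M Y"
      using distributed_integrable[OF 2(2), of "\<lambda>x. x"] integrable_normal_moment_nz_1[OF 2(1)]
      by simp
    moreover have "integrable M (\<lambda>x. (Y x - m)\<^sup>2)"
      using distributed_integrable[OF 2(2), of "\<lambda>x. (x - m)\<^sup>2"] integrable_normal_moment[OF 2(1), of m 2]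
      by simp
    ultimately have "integrable M (\<lambda>x. (Y x - m)\<^sup>2 + 2 * m * Y x - m\<^sup>2)" by auto
    then show ?thesis by (simp add: power2_diff algebra_simps)
  qed
qed

lemma char_gaussian_rv:
  assumes "gaussian_rv M Y"
  shows "(CLINT x|M. iexp (Y x)) = iexp (expectation Y) * complex_of_real (exp (- variance Y / 2))"
proof -
  have meas: "Y \<in> borel_measurable M" using assms by (simp add: gaussian_rv_def)
  consider c where "AE x in M. Y x = c"
    | m sd where "sd > 0" "distributed M lborel Y (normal_density m sd)"
    using assms by (auto simp: gaussian_rv_def)
  then show ?thesis
  proof cases
    case 1
    have e: "expectation Y = c"
      using integral_cong_AE[of Y M "\<lambda>_. c"] 1 meas by (simp add: prob_space)
    have "variance Y = (\<integral>x. 0 \<partial>M)"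
      by (rule integral_cong_AE) (use 1 meas e in auto)
    moreover have "(CLINT x|M. iexp (Y x)) = (CLINT x|M. iexp c)"
      by (rule integral_cong_AE) (use 1 meas in auto)
    ultimately show ?thesis using e by (simp add: prob_space)
  next
    case 2
    note sd = \<open>sd > 0\<close>
    define Z where "Z x = (Y x - m) / sd" for x
    have Zm: "Z \<in> borel_measurable M" using meas by (simp add: Z_def[abs_def])
    have "distributed M lborel Z std_normal_density"
      using normal_standard_normal_convert[OF sd, of Y m] 2(2) by (simp add: Z_def[abs_def])
    moreover have "distr M borel Z = distr M lborel Z" by (rule distr_cong) auto
    ultimately have dZ: "distr M borel Z = std_normal_distribution"
      by (simp add: distributed_def)
    have "(CLINT x|M. iexp (sd * Z x)) = char std_normal_distribution sd"
      unfolding char_def dZ[symmetric] by (subst integral_distr) (use Zm in auto)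
    then have char_Z: "(CLINT x|M. iexp (sd * Z x)) = complex_of_real (exp (- (sd\<^sup>2) / 2))"
      by (simp only: char_std_normal_distribution)
    have "iexp (Y x) = iexp m * iexp (sd * Z x)" for x
    proof -
      have "Y x = m + sd * Z x" using sd by (simp add: Z_def)
      then show ?thesis by (simp only: iexp_add)
    qed
    then have "(CLINT x|M. iexp (Y x)) = (CLINT x|M. iexp m * iexp (sd * Z x))"
      by simp
    also have "\<dots> = iexp m * complex_of_real (exp (- (sd\<^sup>2) / 2))" by (simp only: integral_mult_right_zero char_Z)
    finally show ?thesis
      using normal_distributed_expectation[OF 2] normal_distributed_variance[OF 2] by simp
  qed
qed

lemma gaussian_pencil_square_integrable:
  fixes D X :: "'a \<Rightarrow> real"
  assumes gauss: "\<And>s. gaussian_rv M (\<lambda>\<omega>. s * D \<omega> + X \<omega>)"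
  shows "D \<in> borel_measurable M" "integrable M (\<lambda>\<omega>. (D \<omega>)\<^sup>2)"
    and "X \<in> borel_measurable M" "integrable M (\<lambda>\<omega>. (X \<omega>)\<^sup>2)"
proof -
  have GX: "gaussian_rv M X" and GDX: "gaussian_rv M (\<lambda>\<omega>. D \<omega> + X \<omega>)"
    using gauss[of 0] gauss[of 1] by simp_all
  then show X: "X \<in> borel_measurable M" "integrable M (\<lambda>\<omega>. (X \<omega>)\<^sup>2)"
    by (simp_all add: gaussian_rv_def integrable_square_gaussian_rv)
  have DX: "(\<lambda>\<omega>. D \<omega> + X \<omega>) \<in> borel_measurable M" "integrable M (\<lambda>\<omega>. (D \<omega> + X \<omega>)\<^sup>2)"
    using GDX by (simp_all add: gaussian_rv_def integrable_square_gaussian_rv)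
  have "(\<lambda>\<omega>. (D \<omega> + X \<omega>) - X \<omega>) \<in> borel_measurable M" using DX X by measurable
  then show "D \<in> borel_measurable M" by simp
  have "integrable M (\<lambda>\<omega>. ((D \<omega> + X \<omega>) - X \<omega>)\<^sup>2)"
    by (rule square_integrable_diff[OF DX(1) X(1) DX(2) X(2)])
  then show "integrable M (\<lambda>\<omega>. (D \<omega>)\<^sup>2)" by simp
qed

lemma char_uncorrelated_gaussian_pencil:
  fixes D X :: "'a \<Rightarrow> real"
  assumes gauss: "\<And>s. gaussian_rv M (\<lambda>\<omega>. s * D \<omega> + X \<omega>)" and uncorr: "covariance D X = 0"
  shows "(CLINT \<omega>|M. iexp (s * (D \<omega> - expectation D) + X \<omega>))
    = (CLINT \<omega>|M. iexp (X \<omega>)) * complex_of_real (exp (- s\<^sup>2 * variance D / 2))"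
proof -
  note sq = gaussian_pencil_square_integrable[OF gauss]
  have "integrable M D" "integrable M X"
    using sq by (auto intro: square_integrable_imp_integrable)
  then have mean: "expectation (\<lambda>\<omega>. s * D \<omega> + X \<omega>) = s * expectation D + expectation X"
    by simp
  have var: "variance (\<lambda>\<omega>. s * D \<omega> + X \<omega>) = s\<^sup>2 * variance D + variance X"
    using variance_scaled_add[OF sq(1,3,2,4)] uncorr by simp
  have "s * (D \<omega> - expectation D) + X \<omega> = - s * expectation D + (s * D \<omega> + X \<omega>)" for \<omega>
    by (simp add: algebra_simps)
  then have "(CLINT \<omega>|M. iexp (s * (D \<omega> - expectation D) + X \<omega>))
      = iexp (- s * expectation D) * (CLINT \<omega>|M. iexp (s * D \<omega> + X \<omega>))"
    by (simp only: iexp_add) simp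
  also have "\<dots> = iexp (- s * expectation D) * (iexp (s * expectation D + expectation X)
      * complex_of_real (exp (- (s\<^sup>2 * variance D + variance X) / 2)))"
    using char_gaussian_rv[OF gauss[of s], unfolded var, unfolded mean] by simp
  also have "\<dots> = (iexp (expectation X) * complex_of_real (exp (- variance X / 2)))
      * complex_of_real (exp (- s\<^sup>2 * variance D / 2))"
  proof -
    have "iexp (- s * expectation D) * iexp (s * expectation D + expectation X) = iexp (expectation X)"
      by (simp only: iexp_add[symmetric]) simp
    moreover have "exp (- (s\<^sup>2 * variance D + variance X) / 2)
        = exp (- variance X / 2) * exp (- s\<^sup>2 * variance D / 2)"
      by (simp add: exp_add[symmetric] field_simps)
    ultimately show ?thesis by (simp add: mult_ac)
  qed
  also have "\<dots> = (CLINT \<omega>|M. iexp (X \<omega>)) * complex_of_real (exp (- s\<^sup>2 * variance D / 2))"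
    using char_gaussian_rv[OF gauss[of 0]] by simp
  finally show ?thesis .
qed

lemma norm_char_shift_sub_linear_le:
  fixes D X :: "'a \<Rightarrow> real"
  assumes [measurable]: "D \<in> borel_measurable M" "X \<in> borel_measurable M"
    and D2: "integrable M (\<lambda>\<omega>. (D \<omega>)\<^sup>2)"
  shows "norm ((CLINT \<omega>|M. iexp (h * D \<omega> + X \<omega>)) - (CLINT \<omega>|M. iexp (X \<omega>))
      - \<i> * h * (CLINT \<omega>|M. complex_of_real (D \<omega>) * iexp (X \<omega>)))
    \<le> h\<^sup>2 * expectation (\<lambda>\<omega>. (D \<omega>)\<^sup>2) / 2"
proof -
  have int_iexp: "integrable M (\<lambda>\<omega>. iexp (f \<omega>))" if "f \<in> borel_measurable M" for f
    by (rule integrable_const_bound[of _ 1]) (use that in \<open>auto simp: norm_exp_i_times\<close>)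
  have "integrable M D" using D2 by (auto intro: square_integrable_imp_integrable)
  then have int_DX: "integrable M (\<lambda>\<omega>. complex_of_real (D \<omega>) * iexp (X \<omega>))"
    by (rule Bochner_Integration.integrable_bound) (auto simp: norm_mult norm_exp_i_times)
  have "(iexp (h * D \<omega>) - 1 - \<i> * (h * D \<omega>)) * iexp (X \<omega>)
      = iexp (h * D \<omega> + X \<omega>) - iexp (X \<omega>) - \<i> * h * (complex_of_real (D \<omega>) * iexp (X \<omega>))" for \<omega>
    by (simp only: iexp_add) (simp add: algebra_simps)
  then have "(CLINT \<omega>|M. (iexp (h * D \<omega>) - 1 - \<i> * (h * D \<omega>)) * iexp (X \<omega>))
    = (CLINT \<omega>|M. iexp (h * D \<omega> + X \<omega>)) - (CLINT \<omega>|M. iexp (X \<omega>))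
      - \<i> * h * (CLINT \<omega>|M. complex_of_real (D \<omega>) * iexp (X \<omega>))"
    using int_iexp[of "\<lambda>\<omega>. h * D \<omega> + X \<omega>"] int_iexp[of X] int_DX by simp
  then have "(CLINT \<omega>|M. iexp (h * D \<omega> + X \<omega>)) - (CLINT \<omega>|M. iexp (X \<omega>))
      - \<i> * h * (CLINT \<omega>|M. complex_of_real (D \<omega>) * iexp (X \<omega>))
    = (CLINT \<omega>|M. (iexp (h * D \<omega>) - 1 - \<i> * (h * D \<omega>)) * iexp (X \<omega>))"
    by simp
  also have "norm \<dots> \<le> (\<integral>\<omega>. norm ((iexp (h * D \<omega>) - 1 - \<i> * (h * D \<omega>)) * iexp (X \<omega>)) \<partial>M)"
    by (rule integral_norm_bound)
  also have "\<dots> \<le> (\<integral>\<omega>. h\<^sup>2 * (D \<omega>)\<^sup>2 / 2 \<partial>M)"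
  proof (rule integral_mono')
    show "integrable M (\<lambda>\<omega>. h\<^sup>2 * (D \<omega>)\<^sup>2 / 2)" using D2 by simp
    show "norm ((iexp (h * D \<omega>) - 1 - \<i> * (h * D \<omega>)) * iexp (X \<omega>)) \<le> h\<^sup>2 * (D \<omega>)\<^sup>2 / 2" for \<omega>
      using iexp_approx1[of "h * D \<omega>" 1]
      by (simp add: norm_mult norm_exp_i_times power2_eq_square diff_diff_eq mult_ac)
  qed simp
  also have "\<dots> = h\<^sup>2 * expectation (\<lambda>\<omega>. (D \<omega>)\<^sup>2) / 2" by simp
  finally show ?thesis .
qed

lemma char_uncorrelated_gaussian:
  fixes D X :: "'a \<Rightarrow> real"
  assumes gauss: "\<And>s. gaussian_rv M (\<lambda>\<omega>. s * D \<omega> + X \<omega>)" and uncorr: "covariance D X = 0"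
  shows "(CLINT \<omega>|M. complex_of_real (D \<omega> - expectation D) * iexp (X \<omega>)) = 0"
proof -
  note sq = gaussian_pencil_square_integrable[OF gauss]
  define v where "v = variance D"
  define \<phi>0 where "\<phi>0 = (CLINT \<omega>|M. iexp (X \<omega>))"
  define Z where "Z = (CLINT \<omega>|M. complex_of_real (D \<omega> - expectation D) * iexp (X \<omega>))"
  have v: "v \<ge> 0" by (simp add: v_def)
  have "norm \<phi>0 \<le> (\<integral>\<omega>. norm (iexp (X \<omega>)) \<partial>M)"
    unfolding \<phi>0_def by (rule integral_norm_bound)
  then have \<phi>0: "norm \<phi>0 \<le> 1" by (simp add: norm_exp_i_times prob_space)
  \<comment> \<open>As a function of h, the characteristic function phi0 * exp (- h^2 v / 2) of the pencil has no
    first-order term, whereas its first-order term computed by Taylor expansion is i h Z.\<close>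
  have bound: "h * norm Z \<le> h\<^sup>2 * v" if "h > 0" for h
  proof -
    have taylor: "norm ((CLINT \<omega>|M. iexp (h * (D \<omega> - expectation D) + X \<omega>)) - \<phi>0 - \<i> * h * Z)
        \<le> h\<^sup>2 * v / 2"
      unfolding \<phi>0_def Z_def v_def
      by (rule norm_char_shift_sub_linear_le) (use sq in \<open>auto intro: square_integrable_diff_const\<close>)
    have exp_bound: "\<bar>exp (- a) - 1\<bar> \<le> a" if "a \<ge> 0" for a :: real
      using exp_ge_add_one_self[of "- a"] that by (auto simp: abs_if)
    have "\<bar>exp (- (h\<^sup>2 * v / 2)) - 1\<bar> \<le> h\<^sup>2 * v / 2"
      by (rule exp_bound) (use v in simp)
    then have "norm (\<phi>0 * complex_of_real (exp (- (h\<^sup>2 * v / 2)) - 1)) \<le> 1 * (h\<^sup>2 * v / 2)"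
      unfolding norm_mult norm_of_real by (intro mult_mono \<phi>0) auto
    moreover have "(CLINT \<omega>|M. iexp (h * (D \<omega> - expectation D) + X \<omega>)) - \<phi>0
        = \<phi>0 * complex_of_real (exp (- (h\<^sup>2 * v / 2)) - 1)"
      using char_uncorrelated_gaussian_pencil[OF gauss uncorr, of h]
      by (simp add: \<phi>0_def v_def algebra_simps)
    ultimately have "norm (\<i> * h * Z) \<le> h\<^sup>2 * v"
      using taylor norm_triangle_ineq4[of "\<phi>0 * complex_of_real (exp (- (h\<^sup>2 * v / 2)) - 1)"
          "\<phi>0 * complex_of_real (exp (- (h\<^sup>2 * v / 2)) - 1) - \<i> * h * Z"]
      by simp
    then show ?thesis using that by (simp add: norm_mult)
  qed
  have "norm Z \<le> 0" by (rule le_zero_if_le_quadratic_bound[OF v bound])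
  then show ?thesis by (simp add: Z_def)
qed

end

section \<open>Orthogonality to all functions of the observations\<close>

lemma indicator_PiE_restrict:
  assumes "finite K"
  shows "indicator (Pi\<^sub>E K A) (\<lambda>k\<in>K. f k) = (\<Prod>k\<in>K. indicator (A k) (f k) :: real)"
proof (cases "\<forall>k\<in>K. f k \<in> A k")
  case False
  then obtain k where k: "k \<in> K" "f k \<notin> A k" by blast
  then have "(\<Prod>k\<in>K. indicator (A k) (f k) :: real) = 0"
    using assms by (auto intro!: prod_zero bexI[of _ k])
  moreover have "(\<lambda>k\<in>K. f k) \<notin> Pi\<^sub>E K A" using k by auto
  ultimately show ?thesis by simp
qed (auto simp: indicator_def PiE_def)

lemma prob_space_PiM_eqI_boxes:
  fixes P Q :: "('k \<Rightarrow> real) measure"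
  assumes K: "finite K"
    and P: "prob_space P" "sets P = sets (PiM K (\<lambda>_. borel))"
    and Q: "prob_space Q" "sets Q = sets (PiM K (\<lambda>_. borel))"
    and boxes: "\<And>A. \<forall>k\<in>K. A k \<in> sets borel \<Longrightarrow> measure P (Pi\<^sub>E K A) = measure Q (Pi\<^sub>E K A)"
  shows "P = Q"
proof (rule measure_eqI_PiM_finite[OF K P(2) Q(2)])
  have fin: "finite_measure P" "finite_measure Q" using P(1) Q(1) by (simp_all add: prob_space_def)
  fix A :: "'k \<Rightarrow> real set" assume "\<And>i. i \<in> K \<Longrightarrow> A i \<in> sets borel"
  then show "emeasure P (Pi\<^sub>E K A) = emeasure Q (Pi\<^sub>E K A)"
    using boxes[of A] finite_measure.emeasure_eq_measure[OF fin(1)] finite_measure.emeasure_eq_measure[OF fin(2)]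
    by simp
next
  show "range (\<lambda>_::nat. space (PiM K (\<lambda>_. borel))) \<subseteq> prod_algebra K (\<lambda>_. borel)"
    using space_in_prod_algebra[of K "\<lambda>_. borel"] by (auto simp: space_PiM)
  show "emeasure P (space (PiM K (\<lambda>_. borel))) \<noteq> \<infinity>"
    using P(1) finite_measure.emeasure_eq_measure[of P] by (simp add: prob_space_def)
qed simp

context prob_space
begin

lemma prob_space_density_normalized:
  fixes W :: "'a \<Rightarrow> real"
  assumes "integrable M W" "\<And>\<omega>. W \<omega> \<ge> 0" "expectation W = c" "c > 0"
  shows "prob_space (density M (\<lambda>\<omega>. ennreal (W \<omega> / c)))"
proof (rule prob_spaceI)
  have "emeasure (density M (\<lambda>\<omega>. ennreal (W \<omega> / c))) (space M) = (\<integral>\<^sup>+\<omega>. ennreal (W \<omega> / c) \<partial>M)"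
    using assms by (simp add: emeasure_density cong: nn_integral_cong)
  also have "\<dots> = ennreal (expectation (\<lambda>\<omega>. W \<omega> / c))"
    by (rule nn_integral_eq_integral) (use assms in auto)
  also have "\<dots> = 1" using assms by simp
  finally show "emeasure (density M (\<lambda>\<omega>. ennreal (W \<omega> / c))) (space (density M (\<lambda>\<omega>. ennreal (W \<omega> / c)))) = 1"
    by simp
qed

lemma integral_weights_comp_eq_by_uniqueness:
  fixes Wp Wn :: "'a \<Rightarrow> real" and F :: "'a \<Rightarrow> 'b" and Test :: "('b \<Rightarrow> complex) set"
  assumes Wp: "integrable M Wp" "\<And>\<omega>. Wp \<omega> \<ge> 0" and Wn: "integrable M Wn" "\<And>\<omega>. Wn \<omega> \<ge> 0"
    and c: "expectation Wp = c" "expectation Wn = c" "c > 0"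
    and F: "F \<in> measurable M L"
    and Test_meas: "\<And>f. f \<in> Test \<Longrightarrow> f \<in> borel_measurable L"
    and Test_eq: "\<And>f. f \<in> Test \<Longrightarrow>
      (CLINT \<omega>|M. complex_of_real (Wp \<omega>) * f (F \<omega>)) = (CLINT \<omega>|M. complex_of_real (Wn \<omega>) * f (F \<omega>))"
    and determining: "\<And>P Q. prob_space P \<Longrightarrow> prob_space Q \<Longrightarrow> sets P = sets L \<Longrightarrow> sets Q = sets L
        \<Longrightarrow> (\<And>f. f \<in> Test \<Longrightarrow> (CLINT x|P. f x) = (CLINT x|Q. f x)) \<Longrightarrow> P = Q"
    and h: "h \<in> borel_measurable L"
  shows "expectation (\<lambda>\<omega>. Wp \<omega> * h (F \<omega>)) = expectation (\<lambda>\<omega>. Wn \<omega> * h (F \<omega>))"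
proof -
  define push where "push W = distr (density M (\<lambda>\<omega>. ennreal (W \<omega> / c))) L F" for W
  have push_integral: "(\<integral>x. f x \<partial>push W) = (\<integral>\<omega>. (W \<omega> / c) *\<^sub>R f (F \<omega>) \<partial>M)"
    if "integrable M W" "\<And>\<omega>. W \<omega> \<ge> 0" "f \<in> borel_measurable L"
    for W and f :: "'b \<Rightarrow> 'c::{banach, second_countable_topology}"
    unfolding push_def using that F c
    by (subst integral_distr) (auto intro!: integral_density)
  have "push Wp = push Wn"
  proof (rule determining)
    show "prob_space (push Wp)" "prob_space (push Wn)" unfolding push_def
      using Wp Wn c F by (auto intro!: prob_space.prob_space_distr prob_space_density_normalized)
    show "sets (push Wp) = sets L" "sets (push Wn) = sets L" by (simp_all add: push_def)
    fix f assume f: "f \<in> Test"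
    have "(CLINT x|push W. f x) = (CLINT \<omega>|M. complex_of_real (W \<omega>) * f (F \<omega>)) / c"
      if "integrable M W" "\<And>\<omega>. W \<omega> \<ge> 0" for W
    proof -
      have "(CLINT x|push W. f x) = (CLINT \<omega>|M. complex_of_real (W \<omega>) * f (F \<omega>) / c)"
        unfolding push_integral[OF that Test_meas[OF f]]
        by (rule Bochner_Integration.integral_cong) (simp_all add: scaleR_conv_of_real)
      then show ?thesis by (simp only: integral_divide_zero)
    qed
    then show "(CLINT x|push Wp. f x) = (CLINT x|push Wn. f x)"
      using Wp Wn Test_eq[OF f] by simp
  qed
  then have "(\<integral>x. h x \<partial>push Wp) = (\<integral>x. h x \<partial>push Wn)" by simp
  then have "expectation (\<lambda>\<omega>. Wp \<omega> / c * h (F \<omega>)) = expectation (\<lambda>\<omega>. Wn \<omega> / c * h (F \<omega>))"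
    using push_integral[OF Wp h] push_integral[OF Wn h] by simp
  then show ?thesis using c by (simp add: integral_divide_zero)
qed

lemma integral_weight_comp_eq_0_by_uniqueness:
  fixes V :: "'a \<Rightarrow> real" and F :: "'a \<Rightarrow> 'b" and Test :: "('b \<Rightarrow> complex) set"
  assumes V: "integrable M V" "expectation V = 0"
    and F: "F \<in> measurable M L"
    and Test_meas: "\<And>f. f \<in> Test \<Longrightarrow> f \<in> borel_measurable L"
    and Test_bounded: "\<And>f x. f \<in> Test \<Longrightarrow> norm (f x) \<le> 1"
    and Test_zero: "\<And>f. f \<in> Test \<Longrightarrow> (CLINT \<omega>|M. complex_of_real (V \<omega>) * f (F \<omega>)) = 0"
    and determining: "\<And>P Q. prob_space P \<Longrightarrow> prob_space Q \<Longrightarrow> sets P = sets L \<Longrightarrow> sets Q = sets L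
        \<Longrightarrow> (\<And>f. f \<in> Test \<Longrightarrow> (CLINT x|P. f x) = (CLINT x|Q. f x)) \<Longrightarrow> P = Q"
    and h: "h \<in> borel_measurable L" "\<And>x. \<bar>h x\<bar> \<le> B"
  shows "expectation (\<lambda>\<omega>. V \<omega> * h (F \<omega>)) = 0"
proof -
  define Vp where "Vp \<omega> = max 0 (V \<omega>)" for \<omega>
  define Vn where "Vn \<omega> = max 0 (- V \<omega>)" for \<omega>
  have Vp: "integrable M Vp" "\<And>\<omega>. Vp \<omega> \<ge> 0" and Vn: "integrable M Vn" "\<And>\<omega>. Vn \<omega> \<ge> 0"
    using V unfolding Vp_def[abs_def] Vn_def[abs_def] by auto
  have V_split: "V = (\<lambda>\<omega>. Vp \<omega> - Vn \<omega>)" by (auto simp: fun_eq_iff Vp_def Vn_def)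
  have c: "expectation Vn = expectation Vp"
    using V Vp Vn by (simp add: V_split)
  have int_h: "integrable M (\<lambda>\<omega>. W \<omega> * h (F \<omega>))" if "integrable M W" for W :: "'a \<Rightarrow> real"
    by (rule integrable_mult_bounded[OF that measurable_compose[OF F h(1)] h(2)])
  have "expectation (\<lambda>\<omega>. Vp \<omega> * h (F \<omega>)) = expectation (\<lambda>\<omega>. Vn \<omega> * h (F \<omega>))"
  proof (cases "expectation Vp = 0")
    case True
    with c have "expectation Vp = 0" "expectation Vn = 0" by simp_all
    then have "AE \<omega> in M. Vp \<omega> = 0" "AE \<omega> in M. Vn \<omega> = 0"
      using Vp Vn by (simp_all add: integral_nonneg_eq_0_iff_AE)
    then show ?thesis
      using borel_measurable_integrable[OF int_h[OF Vp(1)]] borel_measurable_integrable[OF int_h[OF Vn(1)]]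
      by (intro integral_cong_AE) auto
  next
    case False
    have int_f: "integrable M (\<lambda>\<omega>. complex_of_real (W \<omega>) * f (F \<omega>))"
      if "integrable M W" "f \<in> Test" for W f
      by (rule Bochner_Integration.integrable_bound[of _ W])
         (use that Test_meas Test_bounded F in \<open>auto simp: norm_mult intro!: AE_I2 mult_left_le\<close>)
    show ?thesis
    proof (rule integral_weights_comp_eq_by_uniqueness[OF Vp Vn refl c _ F Test_meas _ determining h(1)])
      show "expectation Vp > 0" using False Vp by (simp add: order_less_le)
      show "(CLINT \<omega>|M. complex_of_real (Vp \<omega>) * f (F \<omega>)) = (CLINT \<omega>|M. complex_of_real (Vn \<omega>) * f (F \<omega>))"
        if "f \<in> Test" for f
      proof -
        have "(CLINT \<omega>|M. complex_of_real (V \<omega>) * f (F \<omega>))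
            = (CLINT \<omega>|M. complex_of_real (Vp \<omega>) * f (F \<omega>) - complex_of_real (Vn \<omega>) * f (F \<omega>))"
          by (rule Bochner_Integration.integral_cong) (simp_all add: V_split left_diff_distrib)
        then show ?thesis
          using Test_zero[OF that] int_f[OF Vp(1) that] int_f[OF Vn(1) that] by simp
      qed
    qed
  qed
  then show ?thesis
    using int_h[OF Vp(1)] int_h[OF Vn(1)] by (simp add: V_split left_diff_distrib)
qed

lemma integral_weight_comp_eq_0_by_char:
  fixes V X :: "'a \<Rightarrow> real"
  assumes V: "integrable M V" and X: "X \<in> borel_measurable M"
    and char: "\<And>t. (CLINT \<omega>|M. complex_of_real (V \<omega>) * iexp (t * X \<omega>)) = 0"
    and h: "h \<in> borel_measurable borel" "\<And>x. \<bar>h x\<bar> \<le> B"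
  shows "expectation (\<lambda>\<omega>. V \<omega> * h (X \<omega>)) = 0"
proof (rule integral_weight_comp_eq_0_by_uniqueness[OF V _ X, where Test = "range (\<lambda>t x. iexp (t * x))"])
  show "expectation V = 0" using char[of 0] by simp
  show "\<And>f x. f \<in> range (\<lambda>t x. iexp (t * x)) \<Longrightarrow> cmod (f x) \<le> 1"
    by (auto simp: norm_exp_i_times)
  show "\<And>f. f \<in> range (\<lambda>t x. iexp (t * x)) \<Longrightarrow> (CLINT \<omega>|M. complex_of_real (V \<omega>) * f (X \<omega>)) = 0"
    using char by auto
  fix P Q :: "real measure"
  assume "prob_space P" "prob_space Q" "sets P = sets borel" "sets Q = sets borel"
    and "\<And>f. f \<in> range (\<lambda>t x. iexp (t * x)) \<Longrightarrow> (CLINT x|P. f x) = (CLINT x|Q. f x)"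
  then show "P = Q"
    by (intro Levy_uniqueness) (auto simp: real_distribution_def real_distribution_axioms_def char_def)
qed (use h in auto)

lemma complex_integral_weight_comp_eq_0_by_char:
  fixes W :: "'a \<Rightarrow> complex" and X :: "'a \<Rightarrow> real"
  assumes W: "integrable M W" and X: "X \<in> borel_measurable M"
    and char: "\<And>t. (CLINT \<omega>|M. W \<omega> * iexp (t * X \<omega>)) = 0"
    and h: "h \<in> borel_measurable borel" "\<And>x. \<bar>h x\<bar> \<le> B"
  shows "(CLINT \<omega>|M. W \<omega> * complex_of_real (h (X \<omega>))) = 0"
proof -
  have int_iexp: "integrable M (\<lambda>\<omega>. U \<omega> * iexp (t * X \<omega>))" if "integrable M U" for U :: "'a \<Rightarrow> complex" and t
    by (rule Bochner_Integration.integrable_bound[OF that]) (use X that in \<open>auto simp: norm_mult norm_exp_i_times\<close>)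
  have char_cnj: "(CLINT \<omega>|M. cnj (W \<omega>) * iexp (t * X \<omega>)) = 0" for t
  proof -
    have "(CLINT \<omega>|M. cnj (W \<omega>) * iexp (t * X \<omega>)) = cnj (CLINT \<omega>|M. W \<omega> * iexp ((- t) * X \<omega>))"
      by (simp add: exp_cnj flip: Bochner_Integration.integral_cnj)
    then show ?thesis using char[of "- t"] by simp
  qed
  have char_Re: "(CLINT \<omega>|M. complex_of_real (Re (W \<omega>)) * iexp (t * X \<omega>)) = 0"
    and char_Im: "(CLINT \<omega>|M. complex_of_real (Im (W \<omega>)) * iexp (t * X \<omega>)) = 0" for t
  proof -
    have "complex_of_real (Re w) * e = 1 / 2 * (w * e + cnj w * e)"
      "complex_of_real (Im w) * e = \<i> / 2 * (cnj w * e - w * e)" for w e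
      by (simp_all add: complex_eq_iff field_simps)
    then show "(CLINT \<omega>|M. complex_of_real (Re (W \<omega>)) * iexp (t * X \<omega>)) = 0"
      "(CLINT \<omega>|M. complex_of_real (Im (W \<omega>)) * iexp (t * X \<omega>)) = 0"
      using int_iexp[OF W, of t] int_iexp[of "\<lambda>\<omega>. cnj (W \<omega>)" t] W char[of t] char_cnj[of t]
      by (simp_all only:) simp_all
  qed
  have int_h: "integrable M (\<lambda>\<omega>. U \<omega> * h (X \<omega>))" if "integrable M U" for U :: "'a \<Rightarrow> real"
    using that h X by (intro integrable_mult_bounded) auto
  have "(CLINT \<omega>|M. W \<omega> * complex_of_real (h (X \<omega>)))
      = (CLINT \<omega>|M. complex_of_real (Re (W \<omega>) * h (X \<omega>)) + \<i> * complex_of_real (Im (W \<omega>) * h (X \<omega>)))"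
    by (rule Bochner_Integration.integral_cong) (simp_all add: complex_eq_iff)
  also have "\<dots> = complex_of_real (expectation (\<lambda>\<omega>. Re (W \<omega>) * h (X \<omega>)))
        + \<i> * complex_of_real (expectation (\<lambda>\<omega>. Im (W \<omega>) * h (X \<omega>)))"
    using int_h[of "\<lambda>\<omega>. Re (W \<omega>)"] int_h[of "\<lambda>\<omega>. Im (W \<omega>)"] W
    by (simp del: of_real_mult)
  also have "\<dots> = 0"
    using integral_weight_comp_eq_0_by_char[OF _ X char_Re h] integral_weight_comp_eq_0_by_char[OF _ X char_Im h]
      W by simp
  finally show ?thesis .
qed

lemma integral_weight_indicators_eq_0_by_char:
  fixes D :: "'a \<Rightarrow> real" and T :: "'k \<Rightarrow> 'a \<Rightarrow> real"
  assumes K: "finite K" and D: "integrable M D"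
    and T: "\<And>k. k \<in> K \<Longrightarrow> T k \<in> borel_measurable M"
    and char: "\<And>u. (CLINT \<omega>|M. complex_of_real (D \<omega>) * iexp (\<Sum>k\<in>K. u k * T k \<omega>)) = 0"
    and A: "\<And>k. k \<in> K \<Longrightarrow> A k \<in> sets borel"
  shows "expectation (\<lambda>\<omega>. D \<omega> * (\<Prod>k\<in>K. indicator (A k) (T k \<omega>))) = 0"
proof -
  define W where "W J u \<omega> = complex_of_real (D \<omega> * (\<Prod>j\<in>J. indicator (A j) (T j \<omega>)))
    * iexp (\<Sum>k\<in>K-J. u k * T k \<omega>)" for J u \<omega>
  have ind_meas: "(\<lambda>\<omega>. indicator (A k) (T k \<omega>) :: real) \<in> borel_measurable M" if "k \<in> K" for k
    using T[OF that] A[OF that] by measurable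
  have W_int: "integrable M (W J u)" if "J \<subseteq> K" for J u
  proof (rule Bochner_Integration.integrable_bound[OF D])
    have "(\<lambda>\<omega>. D \<omega> * (\<Prod>j\<in>J. indicator (A j) (T j \<omega>))) \<in> borel_measurable M"
      using that D ind_meas by (intro borel_measurable_times borel_measurable_prod) auto
    moreover have "(\<lambda>\<omega>. \<Sum>k\<in>K-J. u k * T k \<omega>) \<in> borel_measurable M"
      using T by (intro borel_measurable_sum borel_measurable_times) auto
    ultimately show "W J u \<in> borel_measurable M"
      unfolding W_def[abs_def] by measurable
    have "norm (W J u \<omega>) = \<bar>D \<omega>\<bar> * \<bar>\<Prod>j\<in>J. indicator (A j) (T j \<omega>) :: real\<bar>" for \<omega>
      by (simp only: W_def norm_mult norm_of_real norm_exp_i_times abs_mult mult_1_right)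
    moreover have "\<bar>\<Prod>j\<in>J. indicator (A j) (T j \<omega>) :: real\<bar> \<le> 1" for \<omega>
      by (auto simp: abs_prod intro!: prod_le_1)
    ultimately show "AE \<omega> in M. norm (W J u \<omega>) \<le> norm (D \<omega>)"
      by (auto intro!: mult_left_le)
  qed
  have "(CLINT \<omega>|M. W J u \<omega>) = 0" if "J \<subseteq> K" for J u
    using finite_subset[OF that K] that
  proof (induction J arbitrary: u rule: finite_induct)
    \<comment> \<open>Each step trades the exponential factor of one coordinate for its indicator (one-dimensional case).\<close>
    case empty
    then show ?case using char by (simp add: W_def)
  next
    case (insert a J)
    have a: "a \<in> K" "J \<subseteq> K" and KJ: "K - J = insert a (K - insert a J)"
      using insert by auto
    have sum_upd: "(\<Sum>k\<in>K - J. (u(a := v)) k * T k \<omega>) = v * T a \<omega> + (\<Sum>k\<in>K - insert a J. u k * T k \<omega>)"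
      for v \<omega> unfolding KJ using K by (subst sum.insert) (auto intro!: sum.cong)
    have shift: "W J (u(a := 0)) \<omega> * iexp (t * T a \<omega>) = W J (u(a := t)) \<omega>" for t \<omega>
      unfolding W_def sum_upd iexp_add by (simp only: mult_ac) simp
    have "(CLINT \<omega>|M. W J (u(a := 0)) \<omega> * complex_of_real (indicator (A a) (T a \<omega>))) = 0"
    proof (rule complex_integral_weight_comp_eq_0_by_char[where X = "T a" and h = "indicator (A a)" and B = 1])
      show "(CLINT \<omega>|M. W J (u(a := 0)) \<omega> * iexp (t * T a \<omega>)) = 0" for t
        using insert.IH[OF a(2), of "u(a := t)"] by (simp only: shift)
      show "integrable M (W J (u(a := 0)))" by (rule W_int[OF a(2)])
      show "T a \<in> borel_measurable M" by (rule T[OF a(1)])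
      show "indicator (A a) \<in> borel_measurable borel" using A[OF a(1)] by simp
      show "\<bar>indicator (A a) x :: real\<bar> \<le> 1" for x by (simp split: split_indicator)
    qed
    moreover have "W J (u(a := 0)) \<omega> * complex_of_real (indicator (A a) (T a \<omega>)) = W (insert a J) u \<omega>" for \<omega>
      using insert(1,2) unfolding W_def sum_upd by (simp add: mult_ac)
    ultimately show ?case by simp
  qed
  from this[of K "\<lambda>_. 0"] have "complex_of_real (expectation (\<lambda>\<omega>. D \<omega> * (\<Prod>k\<in>K. indicator (A k) (T k \<omega>)))) = 0"
    by (simp only: W_def Diff_cancel sum.empty of_real_0 mult_zero_right exp_zero mult_1_right
        integral_complex_of_real)
  then show ?thesis by simp
qed

lemma integral_weight_comp_eq_0_by_multivariate_char:
  fixes D :: "'a \<Rightarrow> real" and T :: "'k \<Rightarrow> 'a \<Rightarrow> real"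
  assumes K: "finite K" and D: "integrable M D"
    and T: "\<And>k. k \<in> K \<Longrightarrow> T k \<in> borel_measurable M"
    and char: "\<And>u. (CLINT \<omega>|M. complex_of_real (D \<omega>) * iexp (\<Sum>k\<in>K. u k * T k \<omega>)) = 0"
    and h: "h \<in> borel_measurable (PiM K (\<lambda>_. borel))" "\<And>x. \<bar>h x\<bar> \<le> B"
  shows "expectation (\<lambda>\<omega>. D \<omega> * h (\<lambda>k\<in>K. T k \<omega>)) = 0"
proof (rule integral_weight_comp_eq_0_by_uniqueness[OF D _ _ _ _ _ _ h,
      where Test = "{\<lambda>x. complex_of_real (indicator (Pi\<^sub>E K A) x) | A. \<forall>k\<in>K. A k \<in> sets borel}"])
  have box: "expectation (\<lambda>\<omega>. D \<omega> * indicator (Pi\<^sub>E K A) (\<lambda>k\<in>K. T k \<omega>)) = 0"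
    if "\<forall>k\<in>K. A k \<in> sets borel" for A
    using integral_weight_indicators_eq_0_by_char[OF K D T char, of A] that
    by (simp add: indicator_PiE_restrict[OF K])
  show "expectation D = 0" using box[of "\<lambda>_. UNIV"] by simp
  show "(\<lambda>\<omega>. \<lambda>k\<in>K. T k \<omega>) \<in> measurable M (PiM K (\<lambda>_. borel))"
    by (rule measurable_restrict) (use T in auto)
  show "f \<in> borel_measurable (PiM K (\<lambda>_. borel))"
    if f: "f \<in> {\<lambda>x. complex_of_real (indicator (Pi\<^sub>E K A) x) | A. \<forall>k\<in>K. A k \<in> sets borel}" for f
  proof -
    obtain A where f: "f = (\<lambda>x. complex_of_real (indicator (Pi\<^sub>E K A) x))" and A: "\<forall>k\<in>K. A k \<in> sets borel"
      using f by blast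
    have "Pi\<^sub>E K A \<in> sets (PiM K (\<lambda>_. borel))" by (rule sets_PiM_I_finite[OF K]) (use A in auto)
    then show ?thesis unfolding f by measurable
  qed
  show "cmod (f x) \<le> 1"
    if "f \<in> {\<lambda>x. complex_of_real (indicator (Pi\<^sub>E K A) x) | A. \<forall>k\<in>K. A k \<in> sets borel}" for f x
    using that by (auto split: split_indicator)
  show "(CLINT \<omega>|M. complex_of_real (D \<omega>) * f (\<lambda>k\<in>K. T k \<omega>)) = 0"
    if "f \<in> {\<lambda>x. complex_of_real (indicator (Pi\<^sub>E K A) x) | A. \<forall>k\<in>K. A k \<in> sets borel}" for f
    using that box by (auto simp del: of_real_mult simp: of_real_mult[symmetric])
  fix P Q :: "('k \<Rightarrow> real) measure"
  assume P: "prob_space P" "sets P = sets (PiM K (\<lambda>_. borel))"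
    and Q: "prob_space Q" "sets Q = sets (PiM K (\<lambda>_. borel))"
    and eq: "\<And>f. f \<in> {\<lambda>x. complex_of_real (indicator (Pi\<^sub>E K A) x) | A. \<forall>k\<in>K. A k \<in> sets borel}
      \<Longrightarrow> (CLINT x|P. f x) = (CLINT x|Q. f x)"
  show "P = Q"
  proof (rule prob_space_PiM_eqI_boxes[OF K P Q])
    fix A :: "'k \<Rightarrow> real set" assume A: "\<forall>k\<in>K. A k \<in> sets borel"
    then have "(CLINT x|P. complex_of_real (indicator (Pi\<^sub>E K A) x))
        = (CLINT x|Q. complex_of_real (indicator (Pi\<^sub>E K A) x))"
      by (intro eq) blast
    moreover have "Pi\<^sub>E K A \<in> sets P" "Pi\<^sub>E K A \<in> sets Q" unfolding P(2) Q(2)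
      by (rule sets_PiM_I_finite[OF K], use A in auto)+
    ultimately show "measure P (Pi\<^sub>E K A) = measure Q (Pi\<^sub>E K A)"
      by (simp add: Int_absorb2 sets.sets_into_space)
  qed
qed

lemma gaussian_uncorrelated_orthogonal:
  fixes D :: "'a \<Rightarrow> real" and T :: "'k \<Rightarrow> 'a \<Rightarrow> real"
  assumes K: "finite K"
    and gauss: "\<And>s u. gaussian_rv M (\<lambda>\<omega>. s * D \<omega> + (\<Sum>k\<in>K. u k * T k \<omega>))"
    and uncorr: "\<And>k. k \<in> K \<Longrightarrow> covariance D (T k) = 0"
    and h: "h \<in> borel_measurable (PiM K (\<lambda>_. borel))" "\<And>x. \<bar>h x\<bar> \<le> B"
  shows "expectation (\<lambda>\<omega>. (D \<omega> - expectation D) * h (\<lambda>k\<in>K. T k \<omega>)) = 0"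
proof (rule integral_weight_comp_eq_0_by_multivariate_char[OF K _ _ _ h])
  note D = gaussian_pencil_square_integrable[OF gauss[of _ "\<lambda>_. 0"], simplified]
  have T: "T k \<in> borel_measurable M" "integrable M (\<lambda>\<omega>. (T k \<omega>)\<^sup>2)" if "k \<in> K" for k
  proof -
    have "(\<Sum>j\<in>K. (if j = k then 1 else 0) * T j \<omega>) = (\<Sum>j\<in>K. if k = j then T j \<omega> else 0)" for \<omega>
      by (rule sum.cong) auto
    then have "(\<Sum>j\<in>K. (if j = k then 1 else 0) * T j \<omega>) = T k \<omega>" for \<omega>
      using K that by simp
    then show "T k \<in> borel_measurable M" "integrable M (\<lambda>\<omega>. (T k \<omega>)\<^sup>2)"
      using gaussian_pencil_square_integrable(3,4)[OF gauss[of _ "\<lambda>j. if j = k then 1 else 0"]] by simp_all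
  qed
  show "integrable M (\<lambda>\<omega>. D \<omega> - expectation D)"
    using D by (auto intro: square_integrable_imp_integrable)
  show "T k \<in> borel_measurable M" if "k \<in> K" for k using T that by blast
  fix u
  have "covariance D (\<lambda>\<omega>. \<Sum>k\<in>K. u k * T k \<omega>) = (\<Sum>k\<in>K. u k * covariance D (T k))"
    using D T by (intro covariance_sum_right K) auto
  then have "covariance D (\<lambda>\<omega>. \<Sum>k\<in>K. u k * T k \<omega>) = 0" using uncorr by simp
  then show "(CLINT \<omega>|M. complex_of_real (D \<omega> - expectation D) * iexp (\<Sum>k\<in>K. u k * T k \<omega>)) = 0"
    using gauss by (rule char_uncorrelated_gaussian[rotated])
qed

end

section \<open>A lower bound for the quadratic risk\<close>

context prob_space
begin

lemma expectation_mult_comp_eq_0_by_truncation: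
  fixes D :: "'a \<Rightarrow> real" and F :: "'a \<Rightarrow> 'b" and g :: "'b \<Rightarrow> real"
  assumes D [measurable]: "D \<in> borel_measurable M"
    and F [measurable]: "F \<in> measurable M L" and g [measurable]: "g \<in> borel_measurable L"
    and DG: "integrable M (\<lambda>\<omega>. D \<omega> * g (F \<omega>))"
    and orth: "\<And>h B. h \<in> borel_measurable L \<Longrightarrow> (\<And>x. \<bar>h x\<bar> \<le> B)
      \<Longrightarrow> expectation (\<lambda>\<omega>. D \<omega> * h (F \<omega>)) = 0"
  shows "expectation (\<lambda>\<omega>. D \<omega> * g (F \<omega>)) = 0"
proof -
  define g_trunc where "g_trunc m x = max (- real m) (min (real m) (g x))" for m :: nat and x
  have [measurable]: "g_trunc m \<in> borel_measurable L" for m unfolding g_trunc_def[abs_def] by measurable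
  have "(\<lambda>m. expectation (\<lambda>\<omega>. D \<omega> * g_trunc m (F \<omega>))) \<longlonglongrightarrow> expectation (\<lambda>\<omega>. D \<omega> * g (F \<omega>))"
  proof (rule integral_dominated_convergence[where w = "\<lambda>\<omega>. \<bar>D \<omega> * g (F \<omega>)\<bar>"])
    show "AE \<omega> in M. (\<lambda>m. D \<omega> * g_trunc m (F \<omega>)) \<longlonglongrightarrow> D \<omega> * g (F \<omega>)"
    proof (intro AE_I2 tendsto_mult_left tendsto_eventually eventually_sequentiallyI)
      show "g_trunc m (F \<omega>) = g (F \<omega>)" if "nat \<lceil>\<bar>g (F \<omega>)\<bar>\<rceil> \<le> m" for \<omega> m
        using that by (auto simp: g_trunc_def)
    qed
    show "AE \<omega> in M. norm (D \<omega> * g_trunc m (F \<omega>)) \<le> \<bar>D \<omega> * g (F \<omega>)\<bar>" for m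
      by (intro AE_I2) (auto simp: g_trunc_def abs_mult intro!: mult_left_mono)
  qed (use DG in auto)
  moreover have "expectation (\<lambda>\<omega>. D \<omega> * g_trunc m (F \<omega>)) = 0" for m
    by (rule orth[of _ "real m"]) (auto simp: g_trunc_def)
  ultimately show ?thesis by (simp add: LIMSEQ_const_iff)
qed

lemma square_expectation_ge_bound:
  fixes W D :: "'a \<Rightarrow> real"
  assumes [measurable]: "W \<in> borel_measurable M" "D \<in> borel_measurable M"
    and W2: "integrable M (\<lambda>\<omega>. (W \<omega>)\<^sup>2)" and D2: "integrable M (\<lambda>\<omega>. (D \<omega>)\<^sup>2)"
    and v: "v > 0" "expectation (\<lambda>\<omega>. (D \<omega>)\<^sup>2) \<le> v"
  shows "(expectation (\<lambda>\<omega>. W \<omega> * D \<omega>))\<^sup>2 / v \<le> expectation (\<lambda>\<omega>. (W \<omega>)\<^sup>2)"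
proof -
  define c where "c = expectation (\<lambda>\<omega>. W \<omega> * D \<omega>)"
  define a where "a = c / v"
  have WD: "integrable M (\<lambda>\<omega>. W \<omega> * D \<omega>)"
    using W2 D2 by (intro integrable_mult_of_square_integrable) auto
  have "0 \<le> expectation (\<lambda>\<omega>. (W \<omega> - a * D \<omega>)\<^sup>2)" by simp
  also have "\<dots> = expectation (\<lambda>\<omega>. (W \<omega>)\<^sup>2 - 2 * a * (W \<omega> * D \<omega>) + a\<^sup>2 * (D \<omega>)\<^sup>2)"
    by (rule Bochner_Integration.integral_cong[OF refl]) (simp add: power2_diff power_mult_distrib)
  also have "\<dots> = expectation (\<lambda>\<omega>. (W \<omega>)\<^sup>2) - 2 * a * c + a\<^sup>2 * expectation (\<lambda>\<omega>. (D \<omega>)\<^sup>2)"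
    using W2 D2 WD by (simp add: c_def)
  also have "\<dots> \<le> expectation (\<lambda>\<omega>. (W \<omega>)\<^sup>2) - 2 * a * c + a\<^sup>2 * v"
    using v by (simp add: mult_left_mono)
  also have "\<dots> = expectation (\<lambda>\<omega>. (W \<omega>)\<^sup>2) - c\<^sup>2 / v"
    using v by (simp add: a_def power2_eq_square field_simps)
  finally show ?thesis by (simp add: c_def)
qed

lemma risk_lower_bound:
  fixes F :: "'a \<Rightarrow> 'b" and Z D :: "'a \<Rightarrow> real" and g :: "'b \<Rightarrow> real"
  assumes F [measurable]: "F \<in> measurable M L" and g [measurable]: "g \<in> borel_measurable L"
    and Z [measurable]: "Z \<in> borel_measurable M" and Z2: "integrable M (\<lambda>\<omega>. (Z \<omega>)\<^sup>2)"
    and D [measurable]: "D \<in> borel_measurable M" and D2: "integrable M (\<lambda>\<omega>. (D \<omega>)\<^sup>2)"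
    and orth: "\<And>h B. h \<in> borel_measurable L \<Longrightarrow> (\<And>x. \<bar>h x\<bar> \<le> B)
      \<Longrightarrow> expectation (\<lambda>\<omega>. D \<omega> * h (F \<omega>)) = 0"
    and ZD: "expectation (\<lambda>\<omega>. Z \<omega> * D \<omega>) = c" and DD: "expectation (\<lambda>\<omega>. (D \<omega>)\<^sup>2) \<le> v"
  shows "ennreal (c\<^sup>2 / v) \<le> (\<integral>\<^sup>+\<omega>. ennreal ((g (F \<omega>) - Z \<omega>)\<^sup>2) \<partial>M)"
proof (cases "v > 0 \<and> (\<integral>\<^sup>+\<omega>. ennreal ((g (F \<omega>) - Z \<omega>)\<^sup>2) \<partial>M) < \<infinity>")
  case False
  then consider "v \<le> 0" | "(\<integral>\<^sup>+\<omega>. ennreal ((g (F \<omega>) - Z \<omega>)\<^sup>2) \<partial>M) = \<infinity>"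
    by (auto simp: not_less top_unique)
  then show ?thesis
  proof cases
    case 1
    then have "c\<^sup>2 / v \<le> 0" by (simp add: divide_nonneg_nonpos)
    then show ?thesis by (simp add: ennreal_neg)
  qed simp
next
  case True
  define W where "W \<omega> = g (F \<omega>) - Z \<omega>" for \<omega>
  have [measurable]: "W \<in> borel_measurable M" unfolding W_def[abs_def] by measurable
  obtain R where "(\<integral>\<^sup>+\<omega>. ennreal ((g (F \<omega>) - Z \<omega>)\<^sup>2) \<partial>M) = ennreal R"
    using True by (cases "\<integral>\<^sup>+\<omega>. ennreal ((g (F \<omega>) - Z \<omega>)\<^sup>2) \<partial>M" rule: ennreal_cases) auto
  then have W2: "integrable M (\<lambda>\<omega>. (W \<omega>)\<^sup>2)"
    by (intro integrableI_nn_integral_finite) (auto simp: W_def)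
  have "integrable M (\<lambda>\<omega>. (W \<omega> - (- Z \<omega>))\<^sup>2)"
    using W2 Z2 by (intro square_integrable_diff) auto
  then have G2: "integrable M (\<lambda>\<omega>. (g (F \<omega>))\<^sup>2)" by (simp add: W_def)
  have DG_int: "integrable M (\<lambda>\<omega>. D \<omega> * g (F \<omega>))"
    by (rule integrable_mult_of_square_integrable) (use D2 G2 in auto)
  have ZD_int: "integrable M (\<lambda>\<omega>. Z \<omega> * D \<omega>)"
    by (rule integrable_mult_of_square_integrable) (use Z2 D2 in auto)
  have DG: "expectation (\<lambda>\<omega>. D \<omega> * g (F \<omega>)) = 0"
    by (rule expectation_mult_comp_eq_0_by_truncation[OF D F g DG_int orth])
  have "expectation (\<lambda>\<omega>. W \<omega> * D \<omega>) = expectation (\<lambda>\<omega>. D \<omega> * g (F \<omega>) - Z \<omega> * D \<omega>)"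
    by (rule Bochner_Integration.integral_cong[OF refl]) (simp add: W_def algebra_simps)
  also have "\<dots> = expectation (\<lambda>\<omega>. D \<omega> * g (F \<omega>)) - expectation (\<lambda>\<omega>. Z \<omega> * D \<omega>)"
    using DG_int ZD_int by simp
  finally have "expectation (\<lambda>\<omega>. W \<omega> * D \<omega>) = - c" using DG ZD by simp
  then have "c\<^sup>2 / v \<le> expectation (\<lambda>\<omega>. (W \<omega>)\<^sup>2)"
    using square_expectation_ge_bound[of W D v] W2 D2 True DD by simp
  also have "ennreal \<dots> = (\<integral>\<^sup>+\<omega>. ennreal ((g (F \<omega>) - Z \<omega>)\<^sup>2) \<partial>M)"
    using W2 by (subst nn_integral_eq_integral) (auto simp: W_def)
  finally show ?thesis by (simp add: ennreal_leI)
qed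

end

section \<open>Principal submatrices of a covariance matrix\<close>

lemma quadratic_form_add_delta:
  fixes \<sigma> :: "'s \<Rightarrow> 's \<Rightarrow> real"
  assumes S: "finite S" and w: "w \<in> S" and sym: "\<And>s t. s \<in> S \<Longrightarrow> t \<in> S \<Longrightarrow> \<sigma> s t = \<sigma> t s"
  shows "(\<Sum>s\<in>S. \<Sum>t\<in>S. (c s + x * (if s = w then 1 else 0)) * \<sigma> s t * (c t + x * (if t = w then 1 else 0)))
    = (\<Sum>s\<in>S. \<Sum>t\<in>S. c s * \<sigma> s t * c t) + 2 * x * (\<Sum>t\<in>S. \<sigma> w t * c t) + x\<^sup>2 * \<sigma> w w"
proof -
  define e where "e s = (if s = w then 1 else 0 :: real)" for s
  have "(\<Sum>s\<in>S. \<Sum>t\<in>S. (c s + x * e s) * \<sigma> s t * (c t + x * e t))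
     = (\<Sum>s\<in>S. \<Sum>t\<in>S. c s * \<sigma> s t * c t) + x * (\<Sum>s\<in>S. \<Sum>t\<in>S. e s * \<sigma> s t * c t)
       + x * (\<Sum>s\<in>S. \<Sum>t\<in>S. c s * \<sigma> s t * e t) + x\<^sup>2 * (\<Sum>s\<in>S. \<Sum>t\<in>S. e s * \<sigma> s t * e t)"
    by (simp add: algebra_simps power2_eq_square sum.distrib sum_distrib_left)
  also have "(\<Sum>s\<in>S. \<Sum>t\<in>S. e s * \<sigma> s t * c t) = (\<Sum>s\<in>S. if s = w then \<Sum>t\<in>S. \<sigma> s t * c t else 0)"
    by (intro sum.cong refl) (simp add: e_def)
  also have "(\<Sum>s\<in>S. \<Sum>t\<in>S. c s * \<sigma> s t * e t) = (\<Sum>s\<in>S. \<Sum>t\<in>S. if t = w then \<sigma> w s * c s else 0)"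
    using sym w by (intro sum.cong refl) (simp add: e_def)
  also have "(\<Sum>s\<in>S. \<Sum>t\<in>S. e s * \<sigma> s t * e t) = (\<Sum>s\<in>S. if s = w then \<Sum>t\<in>S. if t = w then \<sigma> s t else 0 else 0)"
    by (intro sum.cong refl) (auto simp: e_def intro!: sum.cong)
  finally show ?thesis using S w by (simp add: e_def sum.delta')
qed

lemma psd_form_kernel:
  fixes \<sigma> :: "'s \<Rightarrow> 's \<Rightarrow> real"
  assumes S: "finite S" and sym: "\<And>s t. s \<in> S \<Longrightarrow> t \<in> S \<Longrightarrow> \<sigma> s t = \<sigma> t s"
    and psd: "\<And>c. (\<Sum>s\<in>S. \<Sum>t\<in>S. c s * \<sigma> s t * c t) \<ge> 0"
    and zero: "(\<Sum>s\<in>S. \<Sum>t\<in>S. c s * \<sigma> s t * c t) = 0"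
    and w: "w \<in> S"
  shows "(\<Sum>t\<in>S. \<sigma> w t * c t) = 0"
proof (rule ccontr)
  define B where "B = (\<Sum>t\<in>S. \<sigma> w t * c t)"
  assume "(\<Sum>t\<in>S. \<sigma> w t * c t) \<noteq> 0"
  then have B: "B \<noteq> 0" by (simp add: B_def)
  define k where "k = \<bar>\<sigma> w w\<bar> + 1"
  have k: "k \<ge> 1" "\<sigma> w w \<le> k" by (auto simp: k_def)
  define x where "x = - B / k"
  have "0 \<le> (\<Sum>s\<in>S. \<Sum>t\<in>S. (c s + x * (if s = w then 1 else 0)) * \<sigma> s t * (c t + x * (if t = w then 1 else 0)))"
    by (rule psd)
  also have "\<dots> = 2 * x * B + x\<^sup>2 * \<sigma> w w"
    using quadratic_form_add_delta[OF S w sym, where c = c and x = x] zero by (simp add: B_def)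
  also have "\<dots> = - 2 * B\<^sup>2 / k + B\<^sup>2 * \<sigma> w w / k\<^sup>2"
    using k by (simp add: x_def power2_eq_square field_simps)
  also have "\<dots> \<le> - 2 * B\<^sup>2 / k + B\<^sup>2 * k / k\<^sup>2"
    using k by (intro add_left_mono divide_right_mono mult_left_mono) auto
  also have "\<dots> = - B\<^sup>2 / k" using k by (simp add: power2_eq_square field_simps)
  finally show False using B k by (simp add: field_simps)
qed

lemma pos_def_restrict_of_inverse:
  fixes \<sigma> \<psi> :: "'s \<Rightarrow> 's \<Rightarrow> real"
  assumes S: "finite S" and YS: "Y \<subseteq> S"
    and sym: "\<And>s t. s \<in> S \<Longrightarrow> t \<in> S \<Longrightarrow> \<sigma> s t = \<sigma> t s"
    and psd: "\<And>c. (\<Sum>s\<in>S. \<Sum>t\<in>S. c s * \<sigma> s t * c t) \<ge> 0"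
    and inv: "\<And>s t. s \<in> S \<Longrightarrow> t \<in> S \<Longrightarrow> (\<Sum>u\<in>S. \<psi> s u * \<sigma> u t) = (if s = t then 1 else 0)"
    and nz: "s0 \<in> Y" "c s0 \<noteq> 0"
  shows "(\<Sum>s\<in>Y. \<Sum>t\<in>Y. c s * \<sigma> s t * c t) > 0"
proof (rule ccontr)
  define c' where "c' x = (if x \<in> Y then c x else 0)" for x
  have "(\<Sum>s\<in>S. \<Sum>t\<in>S. c' s * \<sigma> s t * c' t) = (\<Sum>s\<in>Y. \<Sum>t\<in>S. c' s * \<sigma> s t * c' t)"
    by (rule sum.mono_neutral_right[OF S YS]) (simp add: c'_def)
  also have "\<dots> = (\<Sum>s\<in>Y. \<Sum>t\<in>Y. c' s * \<sigma> s t * c' t)"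
    by (intro sum.cong refl sum.mono_neutral_right[OF S YS]) (simp add: c'_def)
  also have "\<dots> = (\<Sum>s\<in>Y. \<Sum>t\<in>Y. c s * \<sigma> s t * c t)"
    by (intro sum.cong refl) (simp add: c'_def)
  finally have eq: "(\<Sum>s\<in>S. \<Sum>t\<in>S. c' s * \<sigma> s t * c' t) = (\<Sum>s\<in>Y. \<Sum>t\<in>Y. c s * \<sigma> s t * c t)" .
  assume "\<not> (\<Sum>s\<in>Y. \<Sum>t\<in>Y. c s * \<sigma> s t * c t) > 0"
  then have "(\<Sum>s\<in>S. \<Sum>t\<in>S. c' s * \<sigma> s t * c' t) = 0" using psd[of c'] eq by simp
  then have kernel: "(\<Sum>t\<in>S. \<sigma> u t * c' t) = 0" if "u \<in> S" for u
    using psd_form_kernel[OF S sym psd _ that] by blast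
  have s0: "s0 \<in> S" using nz YS by auto
  have "c' s0 = (\<Sum>t\<in>S. (if s0 = t then 1 else 0) * c' t)"
    using S s0 by (simp add: if_distrib[of "\<lambda>x. x * _"] sum.delta cong: if_cong)
  also have "\<dots> = (\<Sum>t\<in>S. (\<Sum>u\<in>S. \<psi> s0 u * \<sigma> u t) * c' t)"
    by (intro sum.cong refl) (simp add: inv[OF s0])
  also have "\<dots> = (\<Sum>u\<in>S. \<psi> s0 u * (\<Sum>t\<in>S. \<sigma> u t * c' t))"
    by (simp add: sum_distrib_right sum_distrib_left mult.assoc) (rule sum.swap)
  also have "\<dots> = 0" by (simp add: kernel)
  finally show False using nz by (simp add: c'_def)
qed

lemma schur_complement_pos_def:
  fixes \<sigma> :: "'s \<Rightarrow> 's \<Rightarrow> real"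
  assumes Y: "finite Y" "a \<notin> Y"
    and sym: "\<And>s t. s \<in> insert a Y \<Longrightarrow> t \<in> insert a Y \<Longrightarrow> \<sigma> s t = \<sigma> t s"
    and pd: "\<And>c. \<exists>s\<in>insert a Y. c s \<noteq> 0 \<Longrightarrow> (\<Sum>s\<in>insert a Y. \<Sum>t\<in>insert a Y. c s * \<sigma> s t * c t) > 0"
  shows schur_complement_pos_def_pivot: "\<sigma> a a > 0"
    and "\<And>c. \<exists>s\<in>Y. c s \<noteq> 0 \<Longrightarrow> (\<Sum>s\<in>Y. \<Sum>t\<in>Y. c s * (\<sigma> s t - \<sigma> s a * \<sigma> a t / \<sigma> a a) * c t) > 0"
proof -
  have split: "(\<Sum>s\<in>insert a Y. \<Sum>t\<in>insert a Y. c s * \<sigma> s t * c t)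
      = c a * \<sigma> a a * c a + 2 * c a * (\<Sum>t\<in>Y. \<sigma> a t * c t) + (\<Sum>s\<in>Y. \<Sum>t\<in>Y. c s * \<sigma> s t * c t)" for c
  proof -
    have "(\<Sum>s\<in>Y. c s * \<sigma> s a * c a) = c a * (\<Sum>t\<in>Y. \<sigma> a t * c t)"
      using sym by (auto simp: sum_distrib_left mult_ac intro!: sum.cong)
    then show ?thesis using Y by (simp add: sum.distrib sum_distrib_left algebra_simps)
  qed
  show pivot: "\<sigma> a a > 0"
  proof -
    define e :: "'s \<Rightarrow> real" where "e s = (if s = a then 1 else 0)" for s
    have "e s = 0" if "s \<in> Y" for s using Y that by (auto simp: e_def)
    then have "(\<Sum>t\<in>Y. \<sigma> a t * e t) = 0" "(\<Sum>s\<in>Y. \<Sum>t\<in>Y. e s * \<sigma> s t * e t) = 0" by simp_all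
    moreover have "0 < (\<Sum>s\<in>insert a Y. \<Sum>t\<in>insert a Y. e s * \<sigma> s t * e t)"
      by (rule pd) (auto simp: e_def)
    ultimately show ?thesis unfolding split by (simp add: e_def)
  qed
  fix c :: "'s \<Rightarrow> real"
  assume nz: "\<exists>s\<in>Y. c s \<noteq> 0"
  define \<beta> where "\<beta> = (\<Sum>t\<in>Y. \<sigma> a t * c t)"
  define c' where "c' = c(a := - \<beta> / \<sigma> a a)"
  have c'Y: "(\<Sum>s\<in>Y. \<Sum>t\<in>Y. c' s * \<sigma> s t * c' t) = (\<Sum>s\<in>Y. \<Sum>t\<in>Y. c s * \<sigma> s t * c t)"
    "(\<Sum>t\<in>Y. \<sigma> a t * c' t) = \<beta>"
    using Y by (auto simp: c'_def \<beta>_def intro!: sum.cong)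
  have "0 < (\<Sum>s\<in>insert a Y. \<Sum>t\<in>insert a Y. c' s * \<sigma> s t * c' t)"
    using nz Y by (intro pd) (auto simp: c'_def)
  also have "\<dots> = (\<Sum>s\<in>Y. \<Sum>t\<in>Y. c s * \<sigma> s t * c t) - \<beta>\<^sup>2 / \<sigma> a a"
    unfolding split c'Y using pivot by (simp add: c'_def power2_eq_square field_simps)
  also have "\<dots> = (\<Sum>s\<in>Y. \<Sum>t\<in>Y. c s * (\<sigma> s t - \<sigma> s a * \<sigma> a t / \<sigma> a a) * c t)"
  proof -
    have "(\<Sum>s\<in>Y. \<Sum>t\<in>Y. (\<sigma> a s * c s) * (\<sigma> a t * c t) / \<sigma> a a) = \<beta>\<^sup>2 / \<sigma> a a"
      by (simp add: \<beta>_def power2_eq_square sum_product sum_divide_distrib)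
    moreover have "c s * (\<sigma> s t - \<sigma> s a * \<sigma> a t / \<sigma> a a) * c t
        = c s * \<sigma> s t * c t - (\<sigma> a s * c s) * (\<sigma> a t * c t) / \<sigma> a a" if "s \<in> Y" for s t
      using sym[of s a] that by (simp add: algebra_simps)
    ultimately show ?thesis by (simp add: sum_subtractf)
  qed
  finally show "(\<Sum>s\<in>Y. \<Sum>t\<in>Y. c s * (\<sigma> s t - \<sigma> s a * \<sigma> a t / \<sigma> a a) * c t) > 0" .
qed

lemma pos_def_solvable:
  fixes \<sigma> :: "'s \<Rightarrow> 's \<Rightarrow> real"
  assumes "finite Y"
    and "\<And>s t. s \<in> Y \<Longrightarrow> t \<in> Y \<Longrightarrow> \<sigma> s t = \<sigma> t s"
    and "\<And>c. \<exists>s\<in>Y. c s \<noteq> 0 \<Longrightarrow> (\<Sum>s\<in>Y. \<Sum>t\<in>Y. c s * \<sigma> s t * c t) > 0"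
  shows "\<exists>b. \<forall>s\<in>Y. (\<Sum>t\<in>Y. \<sigma> s t * b t) = v s"
  using assms
proof (induction Y arbitrary: \<sigma> v rule: finite_induct)
  \<comment> \<open>Gaussian elimination of the new coordinate, whose Schur complement is again positive definite.\<close>
  case empty
  then show ?case by simp
next
  case (insert a Y)
  note pivot = schur_complement_pos_def_pivot[OF insert(1,2) insert.prems]
  define \<sigma>' where "\<sigma>' s t = \<sigma> s t - \<sigma> s a * \<sigma> a t / \<sigma> a a" for s t
  obtain b' where b': "\<And>s. s \<in> Y \<Longrightarrow> (\<Sum>t\<in>Y. \<sigma>' s t * b' t) = v s - \<sigma> s a * v a / \<sigma> a a"
  proof -
    have "\<exists>b. \<forall>s\<in>Y. (\<Sum>t\<in>Y. \<sigma>' s t * b t) = v s - \<sigma> s a * v a / \<sigma> a a"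
    proof (rule insert.IH)
      show "\<sigma>' s t = \<sigma>' t s" if "s \<in> Y" "t \<in> Y" for s t
        using insert.prems(1)[of s t] insert.prems(1)[of s a] insert.prems(1)[of a t] that
        by (simp add: \<sigma>'_def)
      show "(\<Sum>s\<in>Y. \<Sum>t\<in>Y. c s * \<sigma>' s t * c t) > 0" if "\<exists>s\<in>Y. c s \<noteq> 0" for c
        unfolding \<sigma>'_def by (rule schur_complement_pos_def(2)[OF insert(1,2) insert.prems that])
    qed
    then show ?thesis using that by blast
  qed
  define b where "b = b'(a := (v a - (\<Sum>t\<in>Y. \<sigma> a t * b' t)) / \<sigma> a a)"
  have b_sum: "(\<Sum>t\<in>insert a Y. \<sigma> s t * b t) = \<sigma> s a * b a + (\<Sum>t\<in>Y. \<sigma> s t * b' t)" for s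
    using insert(1,2) by (auto simp: b_def intro!: sum.cong)
  have "(\<Sum>t\<in>insert a Y. \<sigma> s t * b t) = v s" if "s \<in> insert a Y" for s
  proof (cases "s = a")
    case True
    then show ?thesis unfolding b_sum using pivot by (simp add: b_def)
  next
    case False
    then have "s \<in> Y" using that by simp
    moreover have "(\<Sum>t\<in>Y. \<sigma>' s t * b' t) = (\<Sum>t\<in>Y. \<sigma> s t * b' t) - \<sigma> s a / \<sigma> a a * (\<Sum>t\<in>Y. \<sigma> a t * b' t)"
      by (simp add: \<sigma>'_def left_diff_distrib sum_subtractf sum_distrib_left mult.assoc)
    ultimately show ?thesis unfolding b_sum using b'[of s] pivot by (simp add: b_def field_simps)
  qed
  then show ?case by blast
qed

lemma inverse_mult_apply:
  fixes \<sigma> \<psi> :: "'s \<Rightarrow> 's \<Rightarrow> real"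
  assumes S: "finite S" "s \<in> S"
    and inv: "\<And>s t. s \<in> S \<Longrightarrow> t \<in> S \<Longrightarrow> (\<Sum>u\<in>S. \<sigma> s u * \<psi> u t) = (if s = t then 1 else 0)"
  shows "(\<Sum>t\<in>S. \<sigma> s t * (\<Sum>v\<in>S. \<psi> t v * u v)) = u s"
proof -
  have "(\<Sum>t\<in>S. \<sigma> s t * (\<Sum>v\<in>S. \<psi> t v * u v)) = (\<Sum>v\<in>S. (\<Sum>t\<in>S. \<sigma> s t * \<psi> t v) * u v)"
    by (simp add: sum_distrib_left sum_distrib_right mult.assoc) (rule sum.swap)
  also have "\<dots> = (\<Sum>v\<in>S. if s = v then u v else 0)"
    using S inv by (intro sum.cong) auto
  finally show ?thesis using S by simp
qed

lemma restricted_solution_sum_le_inverse: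
  fixes \<sigma> \<psi> :: "'s \<Rightarrow> 's \<Rightarrow> real" and b :: "'s \<Rightarrow> real"
  assumes S: "finite S" and YS: "Y \<subseteq> S"
    and sym: "\<And>s t. s \<in> S \<Longrightarrow> t \<in> S \<Longrightarrow> \<sigma> s t = \<sigma> t s"
    and psd: "\<And>c. (\<Sum>s\<in>S. \<Sum>t\<in>S. c s * \<sigma> s t * c t) \<ge> 0"
    and inv: "\<And>s t. s \<in> S \<Longrightarrow> t \<in> S \<Longrightarrow> (\<Sum>u\<in>S. \<sigma> s u * \<psi> u t) = (if s = t then 1 else 0)"
    and b: "\<And>s. s \<in> Y \<Longrightarrow> (\<Sum>t\<in>Y. \<sigma> s t * b t) = (if s \<in> R then 1 else 0)"
  shows "(\<Sum>t\<in>Y \<inter> R. b t) \<le> (\<Sum>s\<in>Y \<inter> R. \<Sum>t\<in>Y \<inter> R. \<psi> s t)"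
proof -
  \<comment> \<open>The inequality is the positivity of the quadratic form at c - b0, where c is \<psi> applied to the
    indicator u of Y \<inter> R and b0 extends b by zero.\<close>
  define u where "u s = (if s \<in> Y \<inter> R then 1 else 0 :: real)" for s
  define c where "c s = (\<Sum>t\<in>S. \<psi> s t * u t)" for s
  define b0 where "b0 s = (if s \<in> Y then b s else 0)" for s
  define w where "w s = (\<Sum>t\<in>S. \<sigma> s t * b0 t)" for s
  have YRS: "Y \<inter> R \<subseteq> S" using YS by auto
  have \<sigma>c: "(\<Sum>t\<in>S. \<sigma> s t * c t) = u s" if "s \<in> S" for s
    unfolding c_def using S that inv by (rule inverse_mult_apply)
  have b0_w: "b0 s * (u s - w s) = 0" for s
  proof (cases "s \<in> Y")
    case True
    have "w s = (\<Sum>t\<in>Y. \<sigma> s t * b t)"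
      unfolding w_def b0_def by (rule sum.mono_neutral_cong_right[OF S YS]) auto
    then show ?thesis using b[OF True] True by (simp add: u_def)
  qed (simp add: b0_def)
  have "0 \<le> (\<Sum>s\<in>S. \<Sum>t\<in>S. (c s - b0 s) * \<sigma> s t * (c t - b0 t))" by (rule psd)
  also have "\<dots> = (\<Sum>s\<in>S. (c s - b0 s) * (u s - w s))"
  proof (rule sum.cong[OF refl])
    fix s assume "s \<in> S"
    have "(\<Sum>t\<in>S. (c s - b0 s) * \<sigma> s t * (c t - b0 t)) = (c s - b0 s) * ((\<Sum>t\<in>S. \<sigma> s t * c t) - w s)"
      by (simp add: w_def sum_distrib_left sum_subtractf right_diff_distrib mult_ac)
    then show "(\<Sum>t\<in>S. (c s - b0 s) * \<sigma> s t * (c t - b0 t)) = (c s - b0 s) * (u s - w s)"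
      using \<sigma>c[OF \<open>s \<in> S\<close>] by simp
  qed
  also have "\<dots> = (\<Sum>s\<in>S. c s * u s) - (\<Sum>s\<in>S. c s * w s)"
  proof -
    have "(c s - b0 s) * (u s - w s) = c s * u s - c s * w s" for s
      using b0_w[of s] by (simp add: algebra_simps) auto
    then show ?thesis by (simp add: sum_subtractf)
  qed
  also have "(\<Sum>s\<in>S. c s * w s) = (\<Sum>t\<in>S. b0 t * (\<Sum>s\<in>S. \<sigma> t s * c s))"
    unfolding w_def using sym
    by (simp add: sum_distrib_left mult_ac) (subst sum.swap, auto intro!: sum.cong)
  also have "\<dots> = (\<Sum>t\<in>S. b0 t * u t)" using \<sigma>c by simp
  finally have "(\<Sum>t\<in>S. b0 t * u t) \<le> (\<Sum>s\<in>S. c s * u s)" by simp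
  moreover have "(\<Sum>t\<in>S. b0 t * u t) = (\<Sum>t\<in>Y \<inter> R. b t)"
    by (rule sum.mono_neutral_cong_right[OF S YRS]) (auto simp: b0_def u_def)
  moreover have "(\<Sum>s\<in>S. c s * u s) = (\<Sum>s\<in>Y \<inter> R. \<Sum>t\<in>Y \<inter> R. \<psi> s t)"
    unfolding c_def
    by (rule sum.mono_neutral_cong_right[OF S YRS])
       (auto simp: u_def split: if_splits intro!: sum.mono_neutral_cong_right[OF S YRS])
  ultimately show ?thesis by simp
qed

lemma restricted_inverse_bound:
  fixes \<sigma> \<psi> :: "'s \<Rightarrow> 's \<Rightarrow> real"
  assumes S: "finite S" and YS: "Y \<subseteq> S"
    and sym: "\<And>s t. s \<in> S \<Longrightarrow> t \<in> S \<Longrightarrow> \<sigma> s t = \<sigma> t s"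
    and psd: "\<And>c. (\<Sum>s\<in>S. \<Sum>t\<in>S. c s * \<sigma> s t * c t) \<ge> 0"
    and inv1: "\<And>s t. s \<in> S \<Longrightarrow> t \<in> S \<Longrightarrow> (\<Sum>u\<in>S. \<sigma> s u * \<psi> u t) = (if s = t then 1 else 0)"
    and inv2: "\<And>s t. s \<in> S \<Longrightarrow> t \<in> S \<Longrightarrow> (\<Sum>u\<in>S. \<psi> s u * \<sigma> u t) = (if s = t then 1 else 0)"
  shows "\<exists>b. (\<forall>s\<in>Y. (\<Sum>t\<in>Y. \<sigma> s t * b t) = (if s \<in> R then 1 else 0))
    \<and> (\<Sum>t\<in>Y \<inter> R. b t) \<le> (\<Sum>s\<in>Y \<inter> R. \<Sum>t\<in>Y \<inter> R. \<psi> s t)"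
proof -
  have "\<exists>b. \<forall>s\<in>Y. (\<Sum>t\<in>Y. \<sigma> s t * b t) = (if s \<in> R then 1 else 0)"
  proof (rule pos_def_solvable)
    show "finite Y" using finite_subset[OF YS S] .
    show "\<sigma> s t = \<sigma> t s" if "s \<in> Y" "t \<in> Y" for s t using sym that YS by blast
    show "(\<Sum>s\<in>Y. \<Sum>t\<in>Y. c s * \<sigma> s t * c t) > 0" if "\<exists>s\<in>Y. c s \<noteq> 0" for c
      using that pos_def_restrict_of_inverse[OF S YS sym psd inv2] by blast
  qed
  then obtain b where b: "\<forall>s\<in>Y. (\<Sum>t\<in>Y. \<sigma> s t * b t) = (if s \<in> R then 1 else 0)" ..
  moreover have "(\<Sum>t\<in>Y \<inter> R. b t) \<le> (\<Sum>s\<in>Y \<inter> R. \<Sum>t\<in>Y \<inter> R. \<psi> s t)"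
  proof (rule restricted_solution_sum_le_inverse[OF S YS sym psd inv1])
    fix s assume "s \<in> Y"
    then show "(\<Sum>t\<in>Y. \<sigma> s t * b t) = (if s \<in> R then 1 else 0)" using b by simp
  qed
  ultimately show ?thesis by (intro exI conjI)
qed

section \<open>The travel time model\<close>

locale travel_time_model = prob_space M
  for M :: "'a measure" and S :: "'s set" and N :: nat and y :: "nat \<Rightarrow> 's set"
    and \<theta> :: "'s \<Rightarrow> 'a \<Rightarrow> real" and \<epsilon> :: "nat \<Rightarrow> 's \<Rightarrow> 'a \<Rightarrow> real"
    and \<tau> :: real and \<sigma> :: "'s \<Rightarrow> 's \<Rightarrow> real" +
  assumes finite_segments: "finite S"
    and routes_subset: "\<And>n. n < N \<Longrightarrow> y n \<subseteq> S"
    and tau_pos: "\<tau> > 0"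
    and theta_indep: "indep_vars (\<lambda>_. borel) \<theta> S"
    and theta_var: "\<And>s. s \<in> S \<Longrightarrow> variance (\<theta> s) = \<tau>\<^sup>2"
    and theta_eps_indep: "indep_set
        (sigma_sets (space M) (\<Union>s\<in>S. {\<theta> s -` A \<inter> space M | A. A \<in> sets borel}))
        (sigma_sets (space M) (\<Union>(n, s)\<in>obs_index N y. {\<epsilon> n s -` A \<inter> space M | A. A \<in> sets borel}))"
    and eps_mean: "\<And>n s. n < N \<Longrightarrow> s \<in> y n \<Longrightarrow> expectation (\<epsilon> n s) = 0"
    and eps_cov: "\<And>n s t. n < N \<Longrightarrow> s \<in> y n \<Longrightarrow> t \<in> y n \<Longrightarrow>
        expectation (\<lambda>\<omega>. \<epsilon> n s \<omega> * \<epsilon> n t \<omega>) = \<sigma> s t"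
    and eps_indep: "indep_vars (\<lambda>n. PiM (y n) (\<lambda>_. borel)) (\<lambda>n \<omega>. restrict (\<lambda>s. \<epsilon> n s \<omega>) (y n)) {..<N}"
    and gauss: "jointly_gaussian M (Inl ` S \<union> Inr ` obs_index N y)
        (\<lambda>i \<omega>. case i of Inl s \<Rightarrow> \<theta> s \<omega> | Inr (n, s) \<Rightarrow> \<epsilon> n s \<omega>)"
begin

definition X_index :: "('s + nat \<times> 's) set" where
  "X_index = Inl ` S \<union> Inr ` obs_index N y"

definition X :: "'s + nat \<times> 's \<Rightarrow> 'a \<Rightarrow> real" where
  "X i \<omega> = (case i of Inl s \<Rightarrow> \<theta> s \<omega> | Inr (n, s) \<Rightarrow> \<epsilon> n s \<omega>)"

definition X_comb :: "('s + nat \<times> 's \<Rightarrow> real) \<Rightarrow> 'a \<Rightarrow> real" where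
  "X_comb c \<omega> = (\<Sum>i\<in>X_index. c i * X i \<omega>)"

(* The covariance of X_comb a and X_comb b: the theta_s are uncorrelated with variance tau^2,
   uncorrelated with the errors, and errors of different trips are uncorrelated. *)
definition cov_form :: "('s + nat \<times> 's \<Rightarrow> real) \<Rightarrow> ('s + nat \<times> 's \<Rightarrow> real) \<Rightarrow> real" where
  "cov_form a b = \<tau>\<^sup>2 * (\<Sum>s\<in>S. a (Inl s) * b (Inl s))
     + (\<Sum>n<N. \<Sum>t\<in>y n. \<Sum>s\<in>y n. b (Inr (n, t)) * \<sigma> t s * a (Inr (n, s)))"

lemma finite_route: "n < N \<Longrightarrow> finite (y n)"
  using finite_subset[OF routes_subset finite_segments] .

lemma obs_index_Sigma: "obs_index N y = Sigma {..<N} y"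
  by (auto simp: obs_index_def)

lemma finite_obs_index: "finite (obs_index N y)"
  unfolding obs_index_Sigma using finite_route by (intro finite_SigmaI) auto

lemma finite_X_index: "finite X_index"
  using finite_segments finite_obs_index by (simp add: X_index_def)

lemma sum_X_index: "(\<Sum>i\<in>X_index. f i) = (\<Sum>s\<in>S. f (Inl s)) + (\<Sum>k\<in>obs_index N y. f (Inr k))"
  unfolding X_index_def using finite_segments finite_obs_index
  by (subst sum.union_disjoint) (auto simp: sum.reindex)

lemma sum_obs_index: "(\<Sum>k\<in>obs_index N y. f k) = (\<Sum>n<N. \<Sum>s\<in>y n. f (n, s))"
  unfolding obs_index_Sigma using finite_route by (subst sum.Sigma) auto

lemma X_comb_split:
  "X_comb c \<omega> = (\<Sum>s\<in>S. c (Inl s) * \<theta> s \<omega>) + (\<Sum>k\<in>obs_index N y. c (Inr k) * \<epsilon> (fst k) (snd k) \<omega>)"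
  by (simp add: X_comb_def sum_X_index X_def split_beta)

lemma gaussian_X_comb: "gaussian_rv M (X_comb c)"
  using gauss[unfolded jointly_gaussian_def, rule_format, OF finite_X_index[unfolded X_index_def] order_refl, of c]
  by (simp add: X_comb_def[abs_def] X_index_def X_def)

lemma X_comb_square_integrable: "X_comb c \<in> borel_measurable M" "integrable M (\<lambda>\<omega>. (X_comb c \<omega>)\<^sup>2)"
  using gaussian_X_comb by (simp_all add: gaussian_rv_def integrable_square_gaussian_rv)

lemma X_eq_X_comb: "i \<in> X_index \<Longrightarrow> X i = X_comb (\<lambda>j. if j = i then 1 else 0)"
  using finite_X_index by (auto simp: X_comb_def fun_eq_iff if_distrib[of "\<lambda>c. c * _"] cong: if_cong)

lemma X_square_integrable:
  assumes "i \<in> X_index" shows "X i \<in> borel_measurable M" "integrable M (\<lambda>\<omega>. (X i \<omega>)\<^sup>2)"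
  using X_comb_square_integrable X_eq_X_comb[OF assms] by simp_all

lemma theta_square_integrable:
  assumes "s \<in> S" shows "\<theta> s \<in> borel_measurable M" "integrable M (\<lambda>\<omega>. (\<theta> s \<omega>)\<^sup>2)"
  using X_square_integrable[of "Inl s"] assms by (simp_all add: X_index_def X_def[abs_def])

lemma eps_square_integrable:
  assumes "(n, s) \<in> obs_index N y" shows "\<epsilon> n s \<in> borel_measurable M" "integrable M (\<lambda>\<omega>. (\<epsilon> n s \<omega>)\<^sup>2)"
  using X_square_integrable[of "Inr (n, s)"] assms by (simp_all add: X_index_def X_def[abs_def])

lemma covariance_theta_theta:
  assumes "s \<in> S" "t \<in> S" shows "covariance (\<theta> s) (\<theta> t) = (if s = t then \<tau>\<^sup>2 else 0)"
proof (cases "s = t")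
  case False
  then have "indep_var borel (\<theta> s) borel (\<theta> t)"
    using indep_vars_imp_indep_var[OF theta_indep assms] by simp
  then show ?thesis
    using False theta_square_integrable assms
    by (simp add: covariance_indep_var square_integrable_imp_integrable)
qed (use assms theta_var in \<open>simp add: covariance_self\<close>)

lemma covariance_theta_eps:
  assumes s: "s \<in> S" and nt: "(n, t) \<in> obs_index N y" shows "covariance (\<theta> s) (\<epsilon> n t) = 0"
proof -
  have "indep_var borel (\<theta> s) borel (\<epsilon> n t)"
  proof (rule indep_var_of_indep_set[OF theta_eps_indep theta_square_integrable(1)[OF s]
        eps_square_integrable(1)[OF nt]])
    show "sigma_sets (space M) {\<theta> s -` A \<inter> space M |A. A \<in> sets borel}
        \<subseteq> sigma_sets (space M) (\<Union>s\<in>S. {\<theta> s -` A \<inter> space M |A. A \<in> sets borel})"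
      by (rule sigma_sets_mono') (use s in auto)
    show "sigma_sets (space M) {\<epsilon> n t -` A \<inter> space M |A. A \<in> sets borel}
        \<subseteq> sigma_sets (space M) (\<Union>(n, s)\<in>obs_index N y. {\<epsilon> n s -` A \<inter> space M |A. A \<in> sets borel})"
      by (rule sigma_sets_mono') (use nt in force)
  qed
  then show ?thesis
    using theta_square_integrable[OF s] eps_square_integrable[OF nt]
    by (simp add: covariance_indep_var square_integrable_imp_integrable)
qed

lemma covariance_eps_eps:
  assumes ns: "(n, s) \<in> obs_index N y" and mt: "(m, t) \<in> obs_index N y"
  shows "covariance (\<epsilon> n s) (\<epsilon> m t) = (if n = m then \<sigma> s t else 0)"
proof -
  have int: "integrable M (\<epsilon> n s)" "integrable M (\<epsilon> m t)"
    using eps_square_integrable[OF ns] eps_square_integrable[OF mt]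
    by (simp_all add: square_integrable_imp_integrable)
  have mean: "expectation (\<epsilon> n s) = 0" "expectation (\<epsilon> m t) = 0"
    using ns mt eps_mean by (auto simp: obs_index_def)
  show ?thesis
  proof (cases "n = m")
    case True
    have "integrable M (\<lambda>\<omega>. \<epsilon> n s \<omega> * \<epsilon> m t \<omega>)"
      using eps_square_integrable[OF ns] eps_square_integrable[OF mt]
      by (intro integrable_mult_of_square_integrable) auto
    then show ?thesis
      using True ns mt int mean eps_cov by (simp add: covariance_eq obs_index_def)
  next
    case False
    have "indep_var (PiM (y n) (\<lambda>_. borel)) (\<lambda>\<omega>. restrict (\<lambda>s. \<epsilon> n s \<omega>) (y n))
        (PiM (y m) (\<lambda>_. borel)) (\<lambda>\<omega>. restrict (\<lambda>s. \<epsilon> m s \<omega>) (y m))"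
      using indep_vars_imp_indep_var[OF eps_indep _ _ False] ns mt by (simp add: obs_index_def)
    then have "indep_var borel ((\<lambda>f. f s) \<circ> (\<lambda>\<omega>. restrict (\<lambda>s. \<epsilon> n s \<omega>) (y n)))
        borel ((\<lambda>f. f t) \<circ> (\<lambda>\<omega>. restrict (\<lambda>s. \<epsilon> m s \<omega>) (y m)))"
      by (rule indep_var_compose) (use ns mt in \<open>auto simp: obs_index_def intro!: measurable_component_singleton\<close>)
    moreover have "(\<lambda>f. f s) \<circ> (\<lambda>\<omega>. restrict (\<lambda>s. \<epsilon> n s \<omega>) (y n)) = \<epsilon> n s"
      "(\<lambda>f. f t) \<circ> (\<lambda>\<omega>. restrict (\<lambda>s. \<epsilon> m s \<omega>) (y m)) = \<epsilon> m t"
      using ns mt by (auto simp: obs_index_def fun_eq_iff)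
    ultimately show ?thesis using False int by (simp add: covariance_indep_var)
  qed
qed

lemma covariance_row_theta:
  assumes t: "t \<in> S"
  shows "(\<Sum>i\<in>X_index. a i * covariance (X (Inl t)) (X i)) = \<tau>\<^sup>2 * a (Inl t)"
proof -
  have "(\<Sum>i\<in>X_index. a i * covariance (X (Inl t)) (X i)) = (\<Sum>s\<in>S. if t = s then \<tau>\<^sup>2 * a (Inl s) else 0)"
    unfolding sum_X_index using t
    by (auto simp: X_def[abs_def] covariance_theta_theta covariance_theta_eps split_paired_all
        intro!: sum.cong sum.neutral)
  then show ?thesis using t finite_segments by simp
qed

lemma covariance_row_eps:
  assumes nt: "(n, t) \<in> obs_index N y"
  shows "(\<Sum>i\<in>X_index. a i * covariance (X (Inr (n, t))) (X i)) = (\<Sum>s\<in>y n. \<sigma> t s * a (Inr (n, s)))"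
proof -
  have "(\<Sum>i\<in>X_index. a i * covariance (X (Inr (n, t))) (X i))
      = (\<Sum>k\<in>obs_index N y. if fst k = n then \<sigma> t (snd k) * a (Inr (n, snd k)) else 0)"
    unfolding sum_X_index using nt
    by (auto simp: X_def[abs_def] covariance_eps_eps covariance_commute[of "\<epsilon> n t" "\<theta> _"]
        covariance_theta_eps split_paired_all intro!: sum.cong sum.neutral)
  also have "\<dots> = (\<Sum>m<N. if m = n then \<Sum>s\<in>y n. \<sigma> t s * a (Inr (n, s)) else 0)"
    unfolding sum_obs_index by (intro sum.cong) auto
  finally show ?thesis using nt by (simp add: obs_index_def)
qed

lemma covariance_X_comb: "covariance (X_comb a) (X_comb b) = cov_form a b"
proof -
  have X_comb_eq: "X_comb c = (\<lambda>\<omega>. \<Sum>i\<in>X_index. c i * X i \<omega>)" for c by (simp add: X_comb_def[abs_def])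
  have "covariance (X_comb a) (X_comb b) = (\<Sum>j\<in>X_index. b j * covariance (X_comb a) (X j))"
    unfolding X_comb_eq[of b]
    by (rule covariance_sum_right) (use finite_X_index X_comb_square_integrable X_square_integrable in auto)
  also have "\<dots> = (\<Sum>j\<in>X_index. b j * (\<Sum>i\<in>X_index. a i * covariance (X j) (X i)))"
  proof (intro sum.cong refl arg_cong2[where f = "(*)"])
    fix j assume "j \<in> X_index"
    have "covariance (X_comb a) (X j) = covariance (X j) (\<lambda>\<omega>. \<Sum>i\<in>X_index. a i * X i \<omega>)"
      by (simp add: covariance_commute X_comb_eq)
    also have "\<dots> = (\<Sum>i\<in>X_index. a i * covariance (X j) (X i))"
      by (rule covariance_sum_right) (use finite_X_index X_square_integrable \<open>j \<in> X_index\<close> in auto)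
    finally show "covariance (X_comb a) (X j) = (\<Sum>i\<in>X_index. a i * covariance (X j) (X i))" .
  qed
  also have "\<dots> = (\<Sum>t\<in>S. b (Inl t) * (\<tau>\<^sup>2 * a (Inl t)))
      + (\<Sum>k\<in>obs_index N y. b (Inr k) * (\<Sum>s\<in>y (fst k). \<sigma> (snd k) s * a (Inr (fst k, s))))"
    unfolding sum_X_index[of "\<lambda>j. b j * (\<Sum>i\<in>X_index. a i * covariance (X j) (X i))"]
    by (auto simp: covariance_row_theta covariance_row_eps split_paired_all
        intro!: sum.cong arg_cong2[where f = "(+)"])
  also have "\<dots> = cov_form a b"
    unfolding cov_form_def sum_obs_index by (simp add: sum_distrib_left mult_ac)
  finally show ?thesis .
qed

definition obs_vec :: "nat \<times> 's \<Rightarrow> 's + nat \<times> 's \<Rightarrow> real" where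
  "obs_vec k i = (if i = Inl (snd k) \<or> i = Inr k then 1 else 0)"

definition route_vec :: "'s set \<Rightarrow> 's + nat \<times> 's \<Rightarrow> real" where
  "route_vec r i = (case i of Inl s \<Rightarrow> if s \<in> r then 1 else 0 | Inr _ \<Rightarrow> 0)"

(* The coefficients of the variable D of the proof idea. *)
definition orth_vec :: "'s set \<Rightarrow> (nat \<Rightarrow> 's \<Rightarrow> real) \<Rightarrow> 's + nat \<times> 's \<Rightarrow> real" where
  "orth_vec r b i = (case i of Inl s \<Rightarrow> if s \<in> r then 1 / \<tau>\<^sup>2 else 0 | Inr (n, s) \<Rightarrow> - b n s)"

lemma X_comb_obs_vec:
  assumes nt: "(n, t) \<in> obs_index N y"
  shows "X_comb (obs_vec (n, t)) = (\<lambda>\<omega>. \<theta> t \<omega> + \<epsilon> n t \<omega>)"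
proof
  fix \<omega>
  have "(\<Sum>s\<in>S. obs_vec (n, t) (Inl s) * \<theta> s \<omega>) = (\<Sum>s\<in>S. if s = t then \<theta> s \<omega> else 0)"
    by (rule sum.cong) (auto simp: obs_vec_def)
  moreover have "(\<Sum>k\<in>obs_index N y. obs_vec (n, t) (Inr k) * \<epsilon> (fst k) (snd k) \<omega>)
      = (\<Sum>k\<in>obs_index N y. if k = (n, t) then \<epsilon> (fst k) (snd k) \<omega> else 0)"
    by (rule sum.cong) (auto simp: obs_vec_def)
  moreover have "t \<in> S" using nt routes_subset by (auto simp: obs_index_def)
  ultimately show "X_comb (obs_vec (n, t)) \<omega> = \<theta> t \<omega> + \<epsilon> n t \<omega>"
    unfolding X_comb_split using nt finite_segments finite_obs_index by simp
qed

lemma X_comb_route_vec: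
  assumes "r \<subseteq> S" shows "X_comb (route_vec r) = (\<lambda>\<omega>. \<Sum>s\<in>r. \<theta> s \<omega>)"
proof
  fix \<omega>
  have "(\<Sum>s\<in>S. route_vec r (Inl s) * \<theta> s \<omega>) = (\<Sum>s\<in>r. \<theta> s \<omega>)"
    using assms finite_segments by (simp add: route_vec_def if_distrib[of "\<lambda>c. c * _"] sum.If_cases Int_absorb1)
  then show "X_comb (route_vec r) \<omega> = (\<Sum>s\<in>r. \<theta> s \<omega>)"
    unfolding X_comb_split by (simp add: route_vec_def)
qed

lemma X_comb_add: "s * X_comb a \<omega> + (\<Sum>k\<in>K. u k * X_comb (f k) \<omega>) = X_comb (\<lambda>i. s * a i + (\<Sum>k\<in>K. u k * f k i)) \<omega>"
  by (simp add: X_comb_def algebra_simps sum.distrib sum_distrib_left sum_distrib_right) (rule sum.swap)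

lemma cov_form_orth_obs:
  assumes b: "\<And>n s. n < N \<Longrightarrow> s \<in> y n \<Longrightarrow> (\<Sum>t\<in>y n. \<sigma> s t * b n t) = (if s \<in> r then 1 else 0)"
    and k: "(n, t) \<in> obs_index N y"
  shows "cov_form (orth_vec r b) (obs_vec (n, t)) = 0"
proof -
  have t: "n < N" "t \<in> y n" "t \<in> S" using k routes_subset by (auto simp: obs_index_def)
  have "(\<Sum>s\<in>S. orth_vec r b (Inl s) * obs_vec (n, t) (Inl s)) = (\<Sum>s\<in>S. if s = t then orth_vec r b (Inl s) else 0)"
    by (rule sum.cong) (auto simp: obs_vec_def)
  also have "\<dots> = (if t \<in> r then 1 / \<tau>\<^sup>2 else 0)"
    using t finite_segments by (simp add: orth_vec_def)
  finally have theta_part: "\<tau>\<^sup>2 * (\<Sum>s\<in>S. orth_vec r b (Inl s) * obs_vec (n, t) (Inl s)) = (if t \<in> r then 1 else 0)"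
    using tau_pos by simp
  have "(\<Sum>m<N. \<Sum>t'\<in>y m. \<Sum>s\<in>y m. obs_vec (n, t) (Inr (m, t')) * \<sigma> t' s * orth_vec r b (Inr (m, s)))
      = (\<Sum>k\<in>obs_index N y. if k = (n, t) then - (\<Sum>s\<in>y n. \<sigma> t s * b n s) else 0)"
    unfolding sum_obs_index
    by (intro sum.cong refl) (auto simp: obs_vec_def orth_vec_def sum_negf)
  also have "\<dots> = - (if t \<in> r then 1 else 0)"
    using k finite_obs_index b[OF t(1,2)] by simp
  finally show ?thesis unfolding cov_form_def theta_part by simp
qed

lemma cov_form_route_orth:
  assumes r: "r \<subseteq> S" shows "cov_form (route_vec r) (orth_vec r b) = real (card r)"
proof -
  have "(\<Sum>s\<in>S. route_vec r (Inl s) * orth_vec r b (Inl s)) = (\<Sum>s\<in>r. 1 / \<tau>\<^sup>2)"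
    using r finite_segments
    by (simp add: route_vec_def orth_vec_def if_distrib[of "\<lambda>c. c * _"] sum.If_cases Int_absorb1)
  then show ?thesis using tau_pos by (simp add: cov_form_def route_vec_def)
qed

lemma cov_form_orth_orth:
  assumes r: "r \<subseteq> S"
    and b: "\<And>n s. n < N \<Longrightarrow> s \<in> y n \<Longrightarrow> (\<Sum>t\<in>y n. \<sigma> s t * b n t) = (if s \<in> r then 1 else 0)"
  shows "cov_form (orth_vec r b) (orth_vec r b) = real (card r) / \<tau>\<^sup>2 + (\<Sum>n<N. \<Sum>t\<in>y n \<inter> r. b n t)"
proof -
  have "(\<Sum>s\<in>S. orth_vec r b (Inl s) * orth_vec r b (Inl s)) = (\<Sum>s\<in>r. 1 / \<tau>\<^sup>2 * (1 / \<tau>\<^sup>2))"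
    using r finite_segments
    by (simp add: orth_vec_def if_distrib[of "\<lambda>c. c * _"] sum.If_cases Int_absorb1)
  then have theta_part: "\<tau>\<^sup>2 * (\<Sum>s\<in>S. orth_vec r b (Inl s) * orth_vec r b (Inl s)) = real (card r) / \<tau>\<^sup>2"
    using tau_pos by (simp add: power2_eq_square)
  have "(\<Sum>t\<in>y n. \<Sum>s\<in>y n. orth_vec r b (Inr (n, t)) * \<sigma> t s * orth_vec r b (Inr (n, s)))
      = (\<Sum>t\<in>y n \<inter> r. b n t)" if n: "n < N" for n
  proof -
    have "(\<Sum>t\<in>y n. \<Sum>s\<in>y n. orth_vec r b (Inr (n, t)) * \<sigma> t s * orth_vec r b (Inr (n, s)))
        = (\<Sum>t\<in>y n. b n t * (\<Sum>s\<in>y n. \<sigma> t s * b n s))"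
      by (simp add: orth_vec_def sum_distrib_left mult_ac)
    also have "\<dots> = (\<Sum>t\<in>y n. if t \<in> r then b n t else 0)"
      using b[OF n] by (intro sum.cong) auto
    finally show ?thesis using finite_route[OF n] by (simp add: sum.If_cases)
  qed
  then show ?thesis unfolding cov_form_def theta_part by simp
qed

theorem integrated_risk_lower_bound:
  assumes r: "r \<subseteq> S" and g: "g \<in> estimators N y"
    and b: "\<And>n s. n < N \<Longrightarrow> s \<in> y n \<Longrightarrow> (\<Sum>t\<in>y n. \<sigma> s t * b n t) = (if s \<in> r then 1 else 0)"
    and v: "real (card r) / \<tau>\<^sup>2 + (\<Sum>n<N. \<Sum>t\<in>y n \<inter> r. b n t) \<le> v"
  shows "ennreal ((real (card r))\<^sup>2 / v) \<le> integrated_risk M N y \<theta> \<epsilon> r g"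
proof -
  define D where "D = X_comb (orth_vec r b)"
  define T where "T k = X_comb (obs_vec k)" for k
  have D: "D \<in> borel_measurable M" "integrable M (\<lambda>\<omega>. (D \<omega>)\<^sup>2)"
    unfolding D_def by (rule X_comb_square_integrable)+
  have obs: "observations N y \<theta> \<epsilon> = (\<lambda>\<omega>. \<lambda>k\<in>obs_index N y. T k \<omega>)"
    by (auto simp: fun_eq_iff observations_def T_def X_comb_obs_vec split: prod.split intro!: restrict_ext)
  have orth: "expectation (\<lambda>\<omega>. (D \<omega> - expectation D) * h (observations N y \<theta> \<epsilon> \<omega>)) = 0"
    if "h \<in> borel_measurable (PiM (obs_index N y) (\<lambda>_. borel))" "\<And>x. \<bar>h x\<bar> \<le> B" for h B
    unfolding obs
  proof (rule gaussian_uncorrelated_orthogonal[OF finite_obs_index _ _ that])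
    show "gaussian_rv M (\<lambda>\<omega>. s * D \<omega> + (\<Sum>k\<in>obs_index N y. u k * T k \<omega>))" for s u
      unfolding D_def T_def X_comb_add by (rule gaussian_X_comb)
    show "covariance D (T k) = 0" if "k \<in> obs_index N y" for k
      using cov_form_orth_obs[OF b, of "fst k" "snd k"] that by (simp add: D_def T_def covariance_X_comb)
  qed
  show ?thesis unfolding integrated_risk_def
  proof (rule risk_lower_bound[where F = "observations N y \<theta> \<epsilon>" and L = "PiM (obs_index N y) (\<lambda>_. borel)"
        and Z = "\<lambda>\<omega>. \<Sum>s\<in>r. \<theta> s \<omega>" and D = "\<lambda>\<omega>. D \<omega> - expectation D"])
    show "observations N y \<theta> \<epsilon> \<in> measurable M (PiM (obs_index N y) (\<lambda>_. borel))"
      unfolding obs T_def by (rule measurable_restrict) (rule X_comb_square_integrable)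
    show "g \<in> borel_measurable (PiM (obs_index N y) (\<lambda>_. borel))"
      using g by (simp add: estimators_def)
    show "(\<lambda>\<omega>. \<Sum>s\<in>r. \<theta> s \<omega>) \<in> borel_measurable M" "integrable M (\<lambda>\<omega>. (\<Sum>s\<in>r. \<theta> s \<omega>)\<^sup>2)"
      using X_comb_square_integrable[of "route_vec r"] by (simp_all add: X_comb_route_vec[OF r])
    show "(\<lambda>\<omega>. D \<omega> - expectation D) \<in> borel_measurable M"
      "integrable M (\<lambda>\<omega>. (D \<omega> - expectation D)\<^sup>2)"
      using D by (auto intro: square_integrable_diff_const)
    show "expectation (\<lambda>\<omega>. (\<Sum>s\<in>r. \<theta> s \<omega>) * (D \<omega> - expectation D)) = real (card r)"
      using covariance_eq_expectation_centered[OF X_comb_square_integrable(1,1,2,2), of "route_vec r" "orth_vec r b"]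
        covariance_X_comb[of "route_vec r" "orth_vec r b"] cov_form_route_orth[OF r]
      by (simp add: X_comb_route_vec[OF r] D_def)
    show "expectation (\<lambda>\<omega>. (D \<omega> - expectation D)\<^sup>2) \<le> v"
      using covariance_X_comb[of "orth_vec r b" "orth_vec r b"] cov_form_orth_orth[OF r b] v
      by (simp add: covariance_self D_def)
  qed (rule orth)
qed

end

lemma sum_co_count_mult:
  assumes r: "finite r"
  shows "(\<Sum>s\<in>r. \<Sum>t\<in>r. real (co_count N y s t) * f s t) = (\<Sum>n<N. \<Sum>s\<in>y n \<inter> r. \<Sum>t\<in>y n \<inter> r. f s t)"
proof -
  have "real (co_count N y s t) * f s t = (\<Sum>n<N. if s \<in> y n \<and> t \<in> y n then f s t else 0)" for s t
  proof -
    have "{n. n < N \<and> s \<in> y n \<and> t \<in> y n} = {..<N} \<inter> {n. s \<in> y n \<and> t \<in> y n}" by auto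
    then show ?thesis by (simp add: co_count_def sum.If_cases)
  qed
  then have "(\<Sum>s\<in>r. \<Sum>t\<in>r. real (co_count N y s t) * f s t)
      = (\<Sum>s\<in>r. \<Sum>t\<in>r. \<Sum>n<N. if s \<in> y n \<and> t \<in> y n then f s t else 0)"
    by simp
  also have "\<dots> = (\<Sum>s\<in>r. \<Sum>n<N. \<Sum>t\<in>r. if s \<in> y n \<and> t \<in> y n then f s t else 0)"
    by (rule sum.cong[OF refl]) (rule sum.swap)
  also have "\<dots> = (\<Sum>n<N. \<Sum>s\<in>r. \<Sum>t\<in>r. if s \<in> y n \<and> t \<in> y n then f s t else 0)"
    by (rule sum.swap)
  also have "\<dots> = (\<Sum>n<N. \<Sum>s\<in>y n \<inter> r. \<Sum>t\<in>y n \<inter> r. f s t)"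
  proof (rule sum.cong[OF refl])
    fix n
    have "(\<Sum>s\<in>r. \<Sum>t\<in>r. if s \<in> y n \<and> t \<in> y n then f s t else 0)
        = (\<Sum>s\<in>r. if s \<in> y n then \<Sum>t\<in>r. if t \<in> y n then f s t else 0 else 0)"
      by (intro sum.cong refl) auto
    then show "(\<Sum>s\<in>r. \<Sum>t\<in>r. if s \<in> y n \<and> t \<in> y n then f s t else 0)
        = (\<Sum>s\<in>y n \<inter> r. \<Sum>t\<in>y n \<inter> r. f s t)"
      using r by (simp add: sum.inter_restrict Int_commute[of "y n"])
  qed
  finally show ?thesis .
qed

theorem lemmaA1:
  fixes M :: "'a measure"
    and S :: "'s set" and N :: nat and y :: "nat \<Rightarrow> 's set"
    and \<theta> :: "'s \<Rightarrow> 'a \<Rightarrow> real" and \<epsilon> :: "nat \<Rightarrow> 's \<Rightarrow> 'a \<Rightarrow> real"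
    and \<mu> \<tau> :: real and \<sigma> \<psi> :: "'s \<Rightarrow> 's \<Rightarrow> real"
    and r :: "'s set" and g :: "(nat \<times> 's \<Rightarrow> real) \<Rightarrow> real"
  assumes prob: "prob_space M"
    and finS: "finite S"
    and routes: "\<And>n. n < N \<Longrightarrow> y n \<subseteq> S \<and> y n \<noteq> {}"
    \<comment> \<open>theta i.i.d. with mean mu and variance tau^2 > 0\<close>
    and tau_pos: "\<tau> > 0"
    and theta_indep: "prob_space.indep_vars M (\<lambda>_. borel) \<theta> S"
    and theta_ident: "\<And>s t. s \<in> S \<Longrightarrow> t \<in> S \<Longrightarrow> distr M borel (\<theta> s) = distr M borel (\<theta> t)"
    and theta_mean: "\<And>s. s \<in> S \<Longrightarrow> prob_space.expectation M (\<theta> s) = \<mu>"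
    and theta_var: "\<And>s. s \<in> S \<Longrightarrow> prob_space.variance M (\<theta> s) = \<tau>\<^sup>2"
    \<comment> \<open>theta independent of the errors\<close>
    and theta_eps_indep: "prob_space.indep_set M
        (sigma_sets (space M) (\<Union>s\<in>S. {\<theta> s -` A \<inter> space M | A. A \<in> sets borel}))
        (sigma_sets (space M) (\<Union>(n, s)\<in>obs_index N y. {\<epsilon> n s -` A \<inter> space M | A. A \<in> sets borel}))"
    \<comment> \<open>errors of each trip: mean 0, covariances sigma\<close>
    and eps_mean: "\<And>n s. n < N \<Longrightarrow> s \<in> y n \<Longrightarrow> prob_space.expectation M (\<epsilon> n s) = 0"
    and eps_cov: "\<And>n s t. n < N \<Longrightarrow> s \<in> y n \<Longrightarrow> t \<in> y n \<Longrightarrow>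
        prob_space.expectation M (\<lambda>\<omega>. \<epsilon> n s \<omega> * \<epsilon> n t \<omega>) = \<sigma> s t"
    \<comment> \<open>errors from different trips independent\<close>
    and eps_indep: "prob_space.indep_vars M (\<lambda>n. PiM (y n) (\<lambda>_. borel))
        (\<lambda>n \<omega>. restrict (\<lambda>s. \<epsilon> n s \<omega>) (y n)) {..<N}"
    \<comment> \<open>errors and theta jointly Gaussian\<close>
    and gauss: "jointly_gaussian M (Inl ` S \<union> Inr ` obs_index N y)
        (\<lambda>i \<omega>. case i of Inl s \<Rightarrow> \<theta> s \<omega> | Inr (n, s) \<Rightarrow> \<epsilon> n s \<omega>)"
    \<comment> \<open>[sigma] is a covariance matrix on S (symmetric, positive semidefinite)\<close>
    and sigma_sym: "\<And>s t. s \<in> S \<Longrightarrow> t \<in> S \<Longrightarrow> \<sigma> s t = \<sigma> t s"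
    and sigma_psd: "\<And>c. (\<Sum>s\<in>S. \<Sum>t\<in>S. c s * \<sigma> s t * c t) \<ge> 0"
    \<comment> \<open>Psi is its inverse (precision matrix)\<close>
    and psi_inv1: "\<And>s t. s \<in> S \<Longrightarrow> t \<in> S \<Longrightarrow> (\<Sum>u\<in>S. \<sigma> s u * \<psi> u t) = (if s = t then 1 else 0)"
    and psi_inv2: "\<And>s t. s \<in> S \<Longrightarrow> t \<in> S \<Longrightarrow> (\<Sum>u\<in>S. \<psi> s u * \<sigma> u t) = (if s = t then 1 else 0)"
    \<comment> \<open>a route r and an optimal estimator for it\<close>
    and route: "r \<subseteq> S" "r \<noteq> {}"
    and opt: "optimal_estimator M N y \<theta> \<epsilon> r g"
  shows "ennreal (real (card r) ^ 2 /
           ((\<Sum>s\<in>r. \<Sum>t\<in>r. real (co_count N y s t) * \<psi> s t) + real (card r) / \<tau>\<^sup>2))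
         \<le> integrated_risk M N y \<theta> \<epsilon> r g"
proof -
  interpret travel_time_model M S N y \<theta> \<epsilon> \<tau> \<sigma>
    using finS routes tau_pos theta_indep theta_var theta_eps_indep eps_mean eps_cov eps_indep gauss
    by (intro travel_time_model.intro[OF prob] travel_time_model_axioms.intro) simp_all
  have "\<exists>b. (\<forall>s\<in>y n. (\<Sum>t\<in>y n. \<sigma> s t * b t) = (if s \<in> r then 1 else 0))
      \<and> (\<Sum>t\<in>y n \<inter> r. b t) \<le> (\<Sum>s\<in>y n \<inter> r. \<Sum>t\<in>y n \<inter> r. \<psi> s t)" if "n < N" for n
    by (rule restricted_inverse_bound[OF finS routes_subset[OF that] sigma_sym sigma_psd psi_inv1 psi_inv2])
  then have "\<forall>n\<in>{..<N}. \<exists>b. (\<forall>s\<in>y n. (\<Sum>t\<in>y n. \<sigma> s t * b t) = (if s \<in> r then 1 else 0))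
      \<and> (\<Sum>t\<in>y n \<inter> r. b t) \<le> (\<Sum>s\<in>y n \<inter> r. \<Sum>t\<in>y n \<inter> r. \<psi> s t)" by blast
  from bchoice[OF this] obtain b where "\<forall>n\<in>{..<N}. (\<forall>s\<in>y n. (\<Sum>t\<in>y n. \<sigma> s t * b n t) = (if s \<in> r then 1 else 0))
      \<and> (\<Sum>t\<in>y n \<inter> r. b n t) \<le> (\<Sum>s\<in>y n \<inter> r. \<Sum>t\<in>y n \<inter> r. \<psi> s t)" ..
  then have b: "\<And>n s. n < N \<Longrightarrow> s \<in> y n \<Longrightarrow> (\<Sum>t\<in>y n. \<sigma> s t * b n t) = (if s \<in> r then 1 else 0)"
    and b_le: "\<And>n. n < N \<Longrightarrow> (\<Sum>t\<in>y n \<inter> r. b n t) \<le> (\<Sum>s\<in>y n \<inter> r. \<Sum>t\<in>y n \<inter> r. \<psi> s t)"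
    by auto
  have "real (card r) / \<tau>\<^sup>2 + (\<Sum>n<N. \<Sum>t\<in>y n \<inter> r. b n t)
      \<le> (\<Sum>s\<in>r. \<Sum>t\<in>r. real (co_count N y s t) * \<psi> s t) + real (card r) / \<tau>\<^sup>2"
    using sum_mono[of "{..<N}", OF b_le] sum_co_count_mult[OF finite_subset[OF route(1) finS]] by simp
  then show ?thesis
    using integrated_risk_lower_bound[OF route(1) _ b] opt by (simp add: optimal_estimator_def)
qed

end
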